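(* Let $\Gamma_1$ be a represented pointclass satisfying the standing assumptions, containing the closed sets and (uniformly computably) closed under finite unions and under the operation $(A_n)_{n\in\mathbb{N}}\mapsto\{0^\mathbb{N}\}\cup\bigcup_{n\in\mathbb{N}}0^n1A_n$. Let $\Gamma=\Gamma_1\cup\overline{\Gamma_1}$ (the closure under complements), also satisfying the standing assumptions. Then $\widehat{\mathrm{Win}_{\Gamma_1}}\leq_W\mathrm{SPE}_\Gamma$.
   Context: $f\leq_W g$ iff there are computable partial $K,H$ on $\mathbb{N}^\mathbb{N}$ such that for every realizer $G$ of $g$, $p\mapsto K(\langle p,G(H(p))\rangle)$ realizes $f$. $\widehat{f}(x_0,x_1,\ldots)=(f(x_0),f(x_1),\ldots)$. $\overline{\Delta}=\{U^C\mid U\in\Delta\}$; $wA=\{wp\mid p\in A\}$. Games: infinite sequential games with choices $\{0,1\}$, players, turn function $d:\{0,1\}^*\to A$, outcomes $O$, valuation $v$, preferences with well-founded inverses; strategy profiles $s:\{0,1\}^*\to\{0,1\}$; play induced from history $\lambda$: $p_n=\lambda_n$ for $n<|\lambda|$, else $p_n=s(p_{<n})$. Nash equilibrium: no player can unilaterally switch strategy to get a strictly preferred outcome; subgame perfect: Nash equilibrium of the game started at every history. Named by numbers of players/outcomes, $d$ and preferences as tables, and for each player $a$ and upper set $U$ w.r.t. $\prec_a$ a $\Gamma$-name of $v^{-1}(U)$. Win/lose games: two players, outcomes $w_1,w_2$, player $i$ prefers $w_i$. $\mathrm{Win}_\Delta$: input a win/lose game with player-1 winning set given by a $\Delta$-name;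 output which player has a winning strategy. $\mathrm{SPE}_\Gamma$: input a two-player game with finitely many outcomes and antagonistic linear preferences; output a subgame perfect equilibrium. Standing assumptions on a pointclass: its win/lose games are determined; contains $\emptyset,\{0,1\}^\mathbb{N}$; uniformly computable closure under rescaling and its inverse and intersection with clopens. *)

theory Defs
  imports Main "HOL-Library.Nat_Bijection"
begin

section \<open>Baire space, Cantor space, tupling\<close>

type_synonym baire = "nat \<Rightarrow> nat"
type_synonym cantor = "nat \<Rightarrow> bool"   (* {0,1}^N, with 0 = False, 1 = True *)

definition pairB :: "baire \<Rightarrow> baire \<Rightarrow> baire" where
  "pairB p q = (\<lambda>n. if even n then p (n div 2) else q (n div 2))"

definition compB :: "nat \<Rightarrow> baire \<Rightarrow> baire" where
  "compB i p = (\<lambda>n. p (prod_encode (i, n)))"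

definition wcode :: "bool list \<Rightarrow> nat" where
  "wcode w = list_encode (map (\<lambda>b. if b then 1 else 0) w)"

definition prepend :: "bool list \<Rightarrow> cantor \<Rightarrow> cantor" where
  "prepend w x = (\<lambda>n. if n < length w then w ! n else x (n - length w))"

definition cyl :: "bool list \<Rightarrow> cantor set" where
  "cyl w = {x. \<forall>n < length w. x n = w ! n}"

definition zeros :: cantor where "zeros = (\<lambda>_. False)"

section \<open>Partial recursive functions and computable partial functions on Baire space\<close>

fun prec_aux :: "(nat \<Rightarrow> nat option) \<Rightarrow> (nat \<Rightarrow> nat option) \<Rightarrow> nat \<Rightarrow> nat \<Rightarrow> nat option" where
  "prec_aux f g x 0 = f x"
| "prec_aux f g x (Suc y) = Option.bind (prec_aux f g x y) (\<lambda>r. g (prod_encode (x, prod_encode (y, r))))"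

definition prec :: "(nat \<Rightarrow> nat option) \<Rightarrow> (nat \<Rightarrow> nat option) \<Rightarrow> nat \<Rightarrow> nat option" where
  "prec f g n = prec_aux f g (fst (prod_decode n)) (snd (prod_decode n))"

definition mu :: "(nat \<Rightarrow> nat option) \<Rightarrow> nat \<Rightarrow> nat option" where
  "mu f x = (if \<exists>y. f (prod_encode (x, y)) = Some 0 \<and> (\<forall>z<y. f (prod_encode (x, z)) \<noteq> None)
             then Some (LEAST y. f (prod_encode (x, y)) = Some 0 \<and> (\<forall>z<y. f (prod_encode (x, z)) \<noteq> None))
             else None)"

inductive_set partrec :: "(nat \<Rightarrow> nat option) set" where
  zero: "(\<lambda>_. Some 0) \<in> partrec"
| suc: "(\<lambda>n. Some (Suc n)) \<in> partrec"
| ident: "(\<lambda>n. Some n) \<in> partrec"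
| pfst: "(\<lambda>n. Some (fst (prod_decode n))) \<in> partrec"
| psnd: "(\<lambda>n. Some (snd (prod_decode n))) \<in> partrec"
| comp: "f \<in> partrec \<Longrightarrow> g \<in> partrec \<Longrightarrow> (\<lambda>n. Option.bind (g n) f) \<in> partrec"
| pair: "f \<in> partrec \<Longrightarrow> g \<in> partrec \<Longrightarrow>
     (\<lambda>n. Option.bind (f n) (\<lambda>a. Option.bind (g n) (\<lambda>b. Some (prod_encode (a, b))))) \<in> partrec"
| prim_rec: "f \<in> partrec \<Longrightarrow> g \<in> partrec \<Longrightarrow> prec f g \<in> partrec"
| minim: "f \<in> partrec \<Longrightarrow> mu f \<in> partrec"

definition prefix_code :: "baire \<Rightarrow> nat \<Rightarrow> nat" where
  "prefix_code p m = list_encode (map p [0..<m])"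

text \<open>A partial function on Baire space is computable iff it is a restriction of the function
  computed by a Type-2 machine: a partial recursive psi, given a finite prefix of the input and an
  output position n, either diverges or yields the n-th output digit; on each point of the domain
  every position is produced by some prefix, and all produced values are consistent.\<close>
definition computableB :: "(baire \<Rightarrow> baire option) \<Rightarrow> bool" where
  "computableB F \<longleftrightarrow> (\<exists>\<psi>\<in>partrec. \<forall>p q. F p = Some q \<longrightarrow>
      (\<forall>n. (\<exists>m. \<psi> (prod_encode (prefix_code p m, n)) = Some (q n)) \<and>
           (\<forall>m v. \<psi> (prod_encode (prefix_code p m, n)) = Some v \<longrightarrow> v = q n)))"

section \<open>Represented spaces, realizers, Weihrauch reducibility, parallelization\<close>

text \<open>A (multi-)representation is a relation "p names x"; a multivalued function
  f :: 'a => 'b set has domain {x. f x \<noteq> {}}.\<close>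

definition realizes :: "('a \<Rightarrow> 'b set) \<Rightarrow> (baire \<Rightarrow> 'a \<Rightarrow> bool) \<Rightarrow> (baire \<Rightarrow> 'b \<Rightarrow> bool)
                        \<Rightarrow> (baire \<Rightarrow> baire option) \<Rightarrow> bool" where
  "realizes f \<delta>A \<delta>B F \<longleftrightarrow>
     (\<forall>p x. \<delta>A p x \<longrightarrow> f x \<noteq> {} \<longrightarrow> (\<exists>q y. F p = Some q \<and> \<delta>B q y \<and> y \<in> f x))"

definition weihrauch_leq ::
  "('a \<Rightarrow> 'b set) \<Rightarrow> (baire \<Rightarrow> 'a \<Rightarrow> bool) \<Rightarrow> (baire \<Rightarrow> 'b \<Rightarrow> bool) \<Rightarrow>
   ('c \<Rightarrow> 'd set) \<Rightarrow> (baire \<Rightarrow> 'c \<Rightarrow> bool) \<Rightarrow> (baire \<Rightarrow> 'd \<Rightarrow> bool) \<Rightarrow> bool" where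
  "weihrauch_leq f \<delta>A \<delta>B g \<delta>C \<delta>D \<longleftrightarrow>
     (\<exists>K H. computableB K \<and> computableB H \<and>
        (\<forall>G. realizes g \<delta>C \<delta>D G \<longrightarrow>
             realizes f \<delta>A \<delta>B (\<lambda>p. Option.bind (H p) (\<lambda>h. Option.bind (G h) (\<lambda>r. K (pairB p r))))))"

definition hat :: "('a \<Rightarrow> 'b set) \<Rightarrow> (nat \<Rightarrow> 'a) \<Rightarrow> (nat \<Rightarrow> 'b) set" where
  "hat f xs = {ys. \<forall>i. ys i \<in> f (xs i)}"

definition rep_seq :: "(baire \<Rightarrow> 'a \<Rightarrow> bool) \<Rightarrow> baire \<Rightarrow> (nat \<Rightarrow> 'a) \<Rightarrow> bool" where
  "rep_seq \<delta> p xs \<longleftrightarrow> (\<forall>i. \<delta> (compB i p) (xs i))"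

definition rep_nat :: "baire \<Rightarrow> nat \<Rightarrow> bool" where
  "rep_nat p n \<longleftrightarrow> p 0 = n"

section \<open>Games\<close>

fun play_pre :: "(bool list \<Rightarrow> bool) \<Rightarrow> bool list \<Rightarrow> nat \<Rightarrow> bool list" where
  "play_pre s h 0 = []"
| "play_pre s h (Suc n) = (let w = play_pre s h n in w @ [if n < length h then h ! n else s w])"

definition play :: "(bool list \<Rightarrow> bool) \<Rightarrow> bool list \<Rightarrow> cantor" where
  "play s h = (\<lambda>n. play_pre s h (Suc n) ! n)"

subsection \<open>Win/lose games (turn d w = True means player 1 moves at w)\<close>

definition p1_wins :: "(bool list \<Rightarrow> bool) \<Rightarrow> cantor set \<Rightarrow> bool" where
  "p1_wins d W \<longleftrightarrow> (\<exists>\<sigma>. \<forall>\<tau>. play (\<lambda>w. if d w then \<sigma> w else \<tau> w) [] \<in> W)"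

definition p2_wins :: "(bool list \<Rightarrow> bool) \<Rightarrow> cantor set \<Rightarrow> bool" where
  "p2_wins d W \<longleftrightarrow> (\<exists>\<tau>. \<forall>\<sigma>. play (\<lambda>w. if d w then \<sigma> w else \<tau> w) [] \<notin> W)"

definition determined :: "(bool list \<Rightarrow> bool) \<Rightarrow> cantor set \<Rightarrow> bool" where
  "determined d W \<longleftrightarrow> p1_wins d W \<or> p2_wins d W"

subsection \<open>General games: players {0..<players}, outcomes {0..<outcomes};
  gpref G a x y means x \<prec>_a y (player a strictly prefers y to x)\<close>

record game =
  players :: nat
  outcomes :: nat
  turn :: "bool list \<Rightarrow> nat"
  gpref :: "nat \<Rightarrow> nat \<Rightarrow> nat \<Rightarrow> bool"
  gval :: "cantor \<Rightarrow> nat"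

definition wf_game :: "game \<Rightarrow> bool" where
  "wf_game G \<longleftrightarrow>
     (\<forall>w. turn G w < players G) \<and> (\<forall>x. gval G x < outcomes G) \<and>
     (\<forall>a x y. gpref G a x y \<longrightarrow> a < players G \<and> x < outcomes G \<and> y < outcomes G) \<and>
     (\<forall>a. (\<forall>x. \<not> gpref G a x x) \<and> (\<forall>x y z. gpref G a x y \<longrightarrow> gpref G a y z \<longrightarrow> gpref G a x z)
          \<and> wfP (\<lambda>y x. gpref G a x y))"

definition upper_set :: "game \<Rightarrow> nat \<Rightarrow> nat set \<Rightarrow> bool" where
  "upper_set G a U \<longleftrightarrow> U \<subseteq> {0..<outcomes G} \<and> (\<forall>x y. x \<in> U \<longrightarrow> gpref G a x y \<longrightarrow> y \<in> U)"

definition nash_at :: "game \<Rightarrow> (bool list \<Rightarrow> bool) \<Rightarrow> bool list \<Rightarrow> bool" where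
  "nash_at G s h \<longleftrightarrow> (\<forall>a < players G. \<forall>s'. (\<forall>w. turn G w \<noteq> a \<longrightarrow> s' w = s w) \<longrightarrow>
       \<not> gpref G a (gval G (play s h)) (gval G (play s' h)))"

definition subgame_perfect :: "game \<Rightarrow> (bool list \<Rightarrow> bool) \<Rightarrow> bool" where
  "subgame_perfect G s \<longleftrightarrow> (\<forall>h. nash_at G s h)"

definition antagonistic_linear :: "game \<Rightarrow> bool" where
  "antagonistic_linear G \<longleftrightarrow> players G = 2 \<and>
     (\<forall>x < outcomes G. \<forall>y < outcomes G. x \<noteq> y \<longrightarrow> gpref G 0 x y \<or> gpref G 0 y x) \<and>
     (\<forall>x y. gpref G 1 x y \<longleftrightarrow> gpref G 0 y x)"

section \<open>Represented pointclasses\<close>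

text \<open>A represented pointclass is a partial surjection from Baire space onto a set of subsets of
  Cantor space; the pointclass itself is its range.\<close>
type_synonym pointclass = "baire \<Rightarrow> cantor set option"

definition pc_rel :: "pointclass \<Rightarrow> baire \<Rightarrow> cantor set \<Rightarrow> bool" where
  "pc_rel \<Gamma> p A \<longleftrightarrow> \<Gamma> p = Some A"

definition const_name :: "nat \<Rightarrow> baire" where "const_name k = (\<lambda>_. k)"

definition clopen_of :: "bool list list \<Rightarrow> cantor set" where
  "clopen_of ws = (\<Union>w \<in> set ws. cyl w)"

definition wlcode :: "bool list list \<Rightarrow> nat" where
  "wlcode ws = list_encode (map wcode ws)"

definition standing_assumptions :: "pointclass \<Rightarrow> bool" where
  "standing_assumptions \<Gamma> \<longleftrightarrow>
     (\<forall>d W. W \<in> ran \<Gamma> \<longrightarrow> determined d W) \<and>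
     {} \<in> ran \<Gamma> \<and> UNIV \<in> ran \<Gamma> \<and>
     (\<exists>F. computableB F \<and> (\<forall>w p A. \<Gamma> p = Some A \<longrightarrow>
        (\<exists>q. F (pairB (const_name (wcode w)) p) = Some q \<and> \<Gamma> q = Some (prepend w ` A)))) \<and>
     (\<exists>F. computableB F \<and> (\<forall>w p A. \<Gamma> p = Some A \<longrightarrow>
        (\<exists>q. F (pairB (const_name (wcode w)) p) = Some q \<and> \<Gamma> q = Some {x. prepend w x \<in> A}))) \<and>
     (\<exists>F. computableB F \<and> (\<forall>ws p A. \<Gamma> p = Some A \<longrightarrow>
        (\<exists>q. F (pairB (const_name (wlcode ws)) p) = Some q \<and> \<Gamma> q = Some (A \<inter> clopen_of ws))))"

text \<open>Closed subsets of Cantor space, named by (characteristic functions of) sets of words: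
  p names the set of all x all of whose finite prefixes w satisfy p (wcode w) = 0.\<close>
definition closed_rep :: "baire \<Rightarrow> cantor set \<Rightarrow> bool" where
  "closed_rep p A \<longleftrightarrow> A = {x. \<forall>n. p (wcode (map x [0..<n])) = 0}"

definition contains_closed_unif :: "pointclass \<Rightarrow> bool" where
  "contains_closed_unif \<Gamma> \<longleftrightarrow> (\<exists>F. computableB F \<and>
     (\<forall>p A. closed_rep p A \<longrightarrow> (\<exists>q. F p = Some q \<and> \<Gamma> q = Some A)))"

definition closed_fin_union_unif :: "pointclass \<Rightarrow> bool" where
  "closed_fin_union_unif \<Gamma> \<longleftrightarrow> (\<exists>F. computableB F \<and>
     (\<forall>p q A B. \<Gamma> p = Some A \<longrightarrow> \<Gamma> q = Some B \<longrightarrow>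
        (\<exists>r. F (pairB p q) = Some r \<and> \<Gamma> r = Some (A \<union> B))))"

definition omega_op :: "(nat \<Rightarrow> cantor set) \<Rightarrow> cantor set" where
  "omega_op As = {zeros} \<union> (\<Union>n. prepend (replicate n False @ [True]) ` As n)"

definition closed_omega_op_unif :: "pointclass \<Rightarrow> bool" where
  "closed_omega_op_unif \<Gamma> \<longleftrightarrow> (\<exists>F. computableB F \<and>
     (\<forall>p As. (\<forall>n. \<Gamma> (compB n p) = Some (As n)) \<longrightarrow>
        (\<exists>r. F p = Some r \<and> \<Gamma> r = Some (omega_op As))))"

text \<open>The closure under complements: a name is a bit followed by a name of the base pointclass;
  bit 0 names the set itself, any other value its complement.\<close>
definition compl_closure :: "pointclass \<Rightarrow> pointclass" where
  "compl_closure \<Gamma> p = (case \<Gamma> (\<lambda>n. p (Suc n)) of None \<Rightarrow> None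
                          | Some A \<Rightarrow> Some (if p 0 = 0 then A else - A))"

section \<open>The problems Win and SPE\<close>

text \<open>Win/lose games as pairs (turn function, player-1 winning set).  A name consists of a
  table of the turn function (value 1: player 1, value 2: player 2) and a name of the winning set.\<close>
definition winlose_rep :: "pointclass \<Rightarrow> baire \<Rightarrow> ((bool list \<Rightarrow> bool) \<times> cantor set) \<Rightarrow> bool" where
  "winlose_rep \<Delta> p G \<longleftrightarrow>
     (\<forall>w. compB 0 p (wcode w) \<in> {1, 2} \<and> (fst G w \<longleftrightarrow> compB 0 p (wcode w) = 1)) \<and>
     \<Delta> (compB 1 p) = Some (snd G)"

definition Win :: "((bool list \<Rightarrow> bool) \<times> cantor set) \<Rightarrow> nat set" where
  "Win G = {i. (i = 1 \<and> p1_wins (fst G) (snd G)) \<or> (i = 2 \<and> p2_wins (fst G) (snd G))}"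

text \<open>Names of games: numbers of players/outcomes, tables of turn function and preferences, and
  for each player a and upper set U a \<Gamma>-name of val^-1(U).\<close>
definition game_rep :: "pointclass \<Rightarrow> baire \<Rightarrow> game \<Rightarrow> bool" where
  "game_rep \<Gamma> p G \<longleftrightarrow> wf_game G \<and>
     players G = compB 0 p 0 \<and> outcomes G = compB 1 p 0 \<and>
     (\<forall>w. turn G w = compB 2 p (wcode w)) \<and>
     (\<forall>a x y. gpref G a x y \<longleftrightarrow> (a < players G \<and> x < outcomes G \<and> y < outcomes G \<and>
                compB 3 p (prod_encode (a, prod_encode (x, y))) \<noteq> 0)) \<and>
     (\<forall>a U. a < players G \<longrightarrow> upper_set G a U \<longrightarrow>
        \<Gamma> (compB (prod_encode (a, set_encode U)) (compB 4 p)) = Some (gval G -` U))"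

definition profile_rep :: "baire \<Rightarrow> (bool list \<Rightarrow> bool) \<Rightarrow> bool" where
  "profile_rep q s \<longleftrightarrow> (\<forall>w. q (wcode w) = (if s w then 1 else 0))"

definition SPE :: "game \<Rightarrow> (bool list \<Rightarrow> bool) set" where
  "SPE G = (if antagonistic_linear G then {s. subgame_perfect G s} else {})"

end

theory Submission
  imports Defs
begin

text \<open>
  Reduction of the parallelization of Win for the pointclass \<Gamma>1 to SPE for the complement
  closure \<Gamma> of \<Gamma>1.  Given a sequence of win/lose games (d_n, W_n) with W_n in \<Gamma>1, the
  reduction game is played by player 0 (the first player of the win/lose games) and player 1
  (the second) with outcomes 0, 1, 2; player 0 prefers larger outcomes, player 1 smaller ones.
  Along 0^omega player 0 may stop with a 1 after n zeros and then choose between outcome 1 (move 0)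
  and entering game n (move 1), where the outcome is 2 if player 0 wins game n and 0 otherwise.
  In every subgame perfect equilibrium player 0 enters game n exactly if he wins it, so the
  equilibrium solves all games simultaneously; conversely such an equilibrium exists because
  winning strategies for all subgames can be glued into one profile.  The valuation has
  preimages of upper sets built from the W_n by prefixing, union and the omega operation, hence
  in \<Gamma>, and all of this is computable on names.
\<close>

section \<open>Total recursive functions\<close>

abbreviation npair where "npair a b \<equiv> prod_encode (a, b)"
abbreviation nfst where "nfst n \<equiv> fst (prod_decode n)"
abbreviation nsnd where "nsnd n \<equiv> snd (prod_decode n)"

named_theorems rec_intros
definition total_rec :: "(nat \<Rightarrow> nat) \<Rightarrow> bool" where "total_rec f \<longleftrightarrow> (\<lambda>n. Some (f n)) \<in> partrec"

lemma rec_const[rec_intros]: "total_rec (\<lambda>_. k)"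
  unfolding total_rec_def
proof (induction k)
  case 0 show ?case by (rule partrec.zero)
next
  case (Suc k)
  have "(\<lambda>n. Option.bind ((\<lambda>_. Some k) n) (\<lambda>n. Some (Suc n))) \<in> partrec"
    by (rule partrec.comp[OF partrec.suc Suc])
  thus ?case by simp
qed

lemma rec_comp: "total_rec f \<Longrightarrow> total_rec g \<Longrightarrow> total_rec (\<lambda>n. f (g n))"
  unfolding total_rec_def using partrec.comp[of "\<lambda>n. Some (f n)" "\<lambda>n. Some (g n)"] by simp

lemma rec_id[rec_intros]: "total_rec (\<lambda>n. n)" unfolding total_rec_def by (rule partrec.ident)

lemma rec_Suc[rec_intros]: "total_rec f \<Longrightarrow> total_rec (\<lambda>n. Suc (f n))"
  using rec_comp[of Suc f] partrec.suc unfolding total_rec_def by simp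

lemma rec_nfst[rec_intros]: "total_rec f \<Longrightarrow> total_rec (\<lambda>n. nfst (f n))"
  using rec_comp[of "\<lambda>n. nfst n" f] partrec.pfst unfolding total_rec_def by simp

lemma rec_nsnd[rec_intros]: "total_rec f \<Longrightarrow> total_rec (\<lambda>n. nsnd (f n))"
  using rec_comp[of "\<lambda>n. nsnd n" f] partrec.psnd unfolding total_rec_def by simp

lemma rec_pe[rec_intros]: "total_rec f \<Longrightarrow> total_rec g \<Longrightarrow> total_rec (\<lambda>n. npair (f n) (g n))"
  unfolding total_rec_def using partrec.pair[of "\<lambda>n. Some (f n)" "\<lambda>n. Some (g n)"] by simp

definition total_rec2 :: "(nat \<Rightarrow> nat \<Rightarrow> nat) \<Rightarrow> bool" where
  "total_rec2 h \<longleftrightarrow> total_rec (\<lambda>n. h (nfst n) (nsnd n))"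

lemma rec2_app: "total_rec2 h \<Longrightarrow> total_rec f \<Longrightarrow> total_rec g \<Longrightarrow> total_rec (\<lambda>n. h (f n) (g n))"
  unfolding total_rec2_def using rec_comp[of "\<lambda>n. h (nfst n) (nsnd n)" "\<lambda>n. npair (f n) (g n)"] rec_pe by simp

fun nrec :: "(nat \<Rightarrow> nat) \<Rightarrow> (nat \<Rightarrow> nat \<Rightarrow> nat \<Rightarrow> nat) \<Rightarrow> nat \<Rightarrow> nat \<Rightarrow> nat" where
  "nrec f g x 0 = f x"
| "nrec f g x (Suc y) = g x y (nrec f g x y)"

lemma prec_aux_tot: "prec_aux (\<lambda>n. Some (f n)) (\<lambda>n. Some (g (nfst n) (nfst (nsnd n)) (nsnd (nsnd n)))) x y
   = Some (nrec f g x y)"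
  by (induction y) auto

lemma rec_nrec: "total_rec f \<Longrightarrow> total_rec (\<lambda>n. g (nfst n) (nfst (nsnd n)) (nsnd (nsnd n))) \<Longrightarrow> total_rec2 (nrec f g)"
proof -
  assume a: "total_rec f" "total_rec (\<lambda>n. g (nfst n) (nfst (nsnd n)) (nsnd (nsnd n)))"
  have "prec (\<lambda>n. Some (f n)) (\<lambda>n. Some (g (nfst n) (nfst (nsnd n)) (nsnd (nsnd n)))) = (\<lambda>n. Some (nrec f g (nfst n) (nsnd n)))"
    by (rule ext) (simp add: prec_def prec_aux_tot)
  with partrec.prim_rec[of "\<lambda>n. Some (f n)" "\<lambda>n. Some (g (nfst n) (nfst (nsnd n)) (nsnd (nsnd n)))"] a
  show ?thesis unfolding total_rec2_def total_rec_def by simp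
qed

lemma nrec_add: "nrec (\<lambda>x. x) (\<lambda>x y r. Suc r) a b = a + b" by (induction b) auto
lemma rec2_add: "total_rec2 (+)"
proof -
  have "total_rec2 (nrec (\<lambda>x. x) (\<lambda>x y r. Suc r))" by (rule rec_nrec) (intro rec_intros)+
  thus ?thesis using nrec_add by (simp add: total_rec2_def)
qed
lemma rec_add[rec_intros]: "total_rec f \<Longrightarrow> total_rec g \<Longrightarrow> total_rec (\<lambda>n. f n + g n)"
  using rec2_app[OF rec2_add] .

lemma nrec_pred: "nrec (\<lambda>x. 0) (\<lambda>x y r. y) a b = b - 1" by (induction b) auto
lemma rec_pred[rec_intros]: "total_rec f \<Longrightarrow> total_rec (\<lambda>n. f n - 1)"
proof -
  assume f: "total_rec f"
  have "total_rec2 (nrec (\<lambda>x. 0) (\<lambda>x y r. y))" by (rule rec_nrec) (intro rec_intros)+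
  from rec2_app[OF this rec_const f] show ?thesis unfolding nrec_pred .
qed

lemma nrec_sub: "nrec (\<lambda>x. x) (\<lambda>x y r. r - 1) a b = a - b" by (induction b) auto
lemma rec_sub[rec_intros]: "total_rec f \<Longrightarrow> total_rec g \<Longrightarrow> total_rec (\<lambda>n. f n - g n)"
proof -
  assume f: "total_rec f" and g: "total_rec g"
  have "total_rec2 (nrec (\<lambda>x. x) (\<lambda>x y r. r - 1))" by (rule rec_nrec) (intro rec_intros)+
  from rec2_app[OF this f g] show ?thesis unfolding nrec_sub .
qed

lemma nrec_ifz: "nrec (\<lambda>x. nfst x) (\<lambda>x y r. nsnd x) (npair a b) z = (if z = 0 then a else b)"
  by (cases z) auto
lemma rec_ifz: "total_rec c \<Longrightarrow> total_rec f \<Longrightarrow> total_rec g \<Longrightarrow> total_rec (\<lambda>n. if c n = 0 then f n else g n)"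
proof -
  assume c: "total_rec c" and f: "total_rec f" and g: "total_rec g"
  have "total_rec2 (nrec (\<lambda>x. nfst x) (\<lambda>x y r. nsnd x))" by (rule rec_nrec) (intro rec_intros)+
  from rec2_app[OF this rec_pe[OF f g] c] show ?thesis unfolding nrec_ifz .
qed

definition rec_pred :: "(nat \<Rightarrow> bool) \<Rightarrow> bool" where
  "rec_pred P \<longleftrightarrow> total_rec (\<lambda>n. if P n then 0 else 1)"

lemma rec_if[rec_intros]: "rec_pred P \<Longrightarrow> total_rec f \<Longrightarrow> total_rec g \<Longrightarrow> total_rec (\<lambda>n. if P n then f n else g n)"
proof -
  assume a: "rec_pred P" "total_rec f" "total_rec g"
  have "(\<lambda>n. if (if P n then 0 else 1::nat) = 0 then f n else g n) = (\<lambda>n. if P n then f n else g n)" by auto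
  with rec_ifz[of "\<lambda>n. if P n then 0 else 1" f g] a show ?thesis unfolding rec_pred_def by simp
qed

lemma rec_pred_I: "total_rec c \<Longrightarrow> (\<And>n. P n \<longleftrightarrow> c n = 0) \<Longrightarrow> rec_pred P"
proof -
  assume a: "total_rec c" "\<And>n. P n \<longleftrightarrow> c n = 0"
  have "(\<lambda>n. if P n then 0 else 1::nat) = (\<lambda>n. if c n = 0 then 0 else 1)" using a(2) by auto
  with rec_ifz[OF a(1) rec_const rec_const, of 0 1] show ?thesis unfolding rec_pred_def by simp
qed

lemma rec_pred_le[rec_intros]: "total_rec f \<Longrightarrow> total_rec g \<Longrightarrow> rec_pred (\<lambda>n. f n \<le> g n)"
  by (rule rec_pred_I[where c="\<lambda>n. f n - g n"], (intro rec_intros)+, auto)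
lemma rec_pred_less[rec_intros]: "total_rec f \<Longrightarrow> total_rec g \<Longrightarrow> rec_pred (\<lambda>n. f n < g n)"
  by (rule rec_pred_I[where c="\<lambda>n. Suc (f n) - g n"], (intro rec_intros)+, auto)
lemma rec_pred_eq[rec_intros]: "total_rec f \<Longrightarrow> total_rec g \<Longrightarrow> rec_pred (\<lambda>n. f n = g n)"
  by (rule rec_pred_I[where c="\<lambda>n. (f n - g n) + (g n - f n)"], (intro rec_intros)+, auto)
lemma rec_pred_not[rec_intros]: "rec_pred P \<Longrightarrow> rec_pred (\<lambda>n. \<not> P n)"
  by (rule rec_pred_I[where c="\<lambda>n. if P n then 1 else 0"], (intro rec_intros)+, auto)
lemma rec_pred_conj[rec_intros]: "rec_pred P \<Longrightarrow> rec_pred Q \<Longrightarrow> rec_pred (\<lambda>n. P n \<and> Q n)"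
  by (rule rec_pred_I[where c="\<lambda>n. if P n then (if Q n then 0 else 1) else 1"], (intro rec_intros)+, auto)
lemma rec_pred_disj[rec_intros]: "rec_pred P \<Longrightarrow> rec_pred Q \<Longrightarrow> rec_pred (\<lambda>n. P n \<or> Q n)"
  by (rule rec_pred_I[where c="\<lambda>n. if P n then 0 else (if Q n then 0 else 1)"], (intro rec_intros)+, auto)
lemma rec_pred_const[rec_intros]: "rec_pred (\<lambda>n. b)"
  by (rule rec_pred_I[where c="\<lambda>n. if b then 0 else 1"], (intro rec_intros)+, auto)

lemma nrec_par: "nrec (\<lambda>x. 0) (\<lambda>x y r. 1 - r) a b = b mod 2" by (induction b) (auto simp: mod_Suc)
lemma rec_pred_even[rec_intros]: "total_rec f \<Longrightarrow> rec_pred (\<lambda>n. even (f n))"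
proof -
  assume f: "total_rec f"
  have "total_rec2 (nrec (\<lambda>x. 0) (\<lambda>x y r. 1 - r))" by (rule rec_nrec) (intro rec_intros)+
  from rec2_app[OF this rec_const f] have "total_rec (\<lambda>n. f n mod 2)" unfolding nrec_par .
  thus ?thesis by (rule rec_pred_I) (simp add: even_iff_mod_2_eq_zero)
qed

lemma nrec_half: "nrec (\<lambda>x. 0) (\<lambda>x y r. if even y then r else Suc r) a b = b div 2"
  by (induction b) auto
lemma rec_half[rec_intros]: "total_rec f \<Longrightarrow> total_rec (\<lambda>n. f n div 2)"
proof -
  assume f: "total_rec f"
  have "total_rec2 (nrec (\<lambda>x. 0) (\<lambda>x y r. if even y then r else Suc r))" by (rule rec_nrec) (intro rec_intros)+
  from rec2_app[OF this rec_const f] show ?thesis unfolding nrec_half .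
qed

lemma rec_multc[rec_intros]: "total_rec f \<Longrightarrow> total_rec (\<lambda>n. c * f n)"
proof (induction c)
  case 0 thus ?case using rec_const[of 0] by simp
next
  case (Suc c)
  hence "total_rec (\<lambda>n. f n + c * f n)" by (intro rec_intros)
  thus ?case by simp
qed

lemma rec_mu: "total_rec f \<Longrightarrow> (\<And>x. \<exists>y. f (npair x y) = 0) \<Longrightarrow> total_rec (\<lambda>x. LEAST y. f (npair x y) = 0)"
proof -
  assume f: "total_rec f" and ex: "\<And>x. \<exists>y. f (npair x y) = 0"
  have "mu (\<lambda>n. Some (f n)) = (\<lambda>x. Some (LEAST y. f (npair x y) = 0))"
    using ex by (auto simp: mu_def)
  with partrec.minim[OF f[unfolded total_rec_def]] show ?thesis unfolding total_rec_def by simp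
qed

section \<open>Codes of finite lists\<close>

definition ctl :: "nat \<Rightarrow> nat" where "ctl c = nsnd (c - 1)"
definition chd :: "nat \<Rightarrow> nat" where "chd c = nfst (c - 1)"
definition cdrop :: "nat \<Rightarrow> nat \<Rightarrow> nat" where "cdrop c k = (ctl ^^ k) c"
definition cnth :: "nat \<Rightarrow> nat \<Rightarrow> nat" where "cnth c k = chd (cdrop c k)"
definition clen :: "nat \<Rightarrow> nat" where "clen c = (LEAST k. cdrop c k = 0)"

lemma prod_decode_0: "prod_decode 0 = (0, 0)"
proof -
  have "prod_encode (0,0) = 0" by (simp add: prod_encode_def)
  thus ?thesis by (metis prod_encode_inverse)
qed
lemma ctl_enc[simp]: "ctl (list_encode xs) = list_encode (tl xs)"
  by (cases xs) (auto simp: ctl_def prod_decode_0)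
lemma chd_enc[simp]: "xs \<noteq> [] \<Longrightarrow> chd (list_encode xs) = hd xs"
  by (cases xs) (auto simp: chd_def)
lemma cdrop_enc[simp]: "cdrop (list_encode xs) k = list_encode (drop k xs)"
  unfolding cdrop_def by (induction k) (auto simp: drop_Suc tl_drop)
lemma cnth_enc[simp]: "k < length xs \<Longrightarrow> cnth (list_encode xs) k = xs ! k"
  unfolding cnth_def by (simp add: hd_drop_conv_nth)
lemma list_encode_0_iff: "list_encode xs = 0 \<longleftrightarrow> xs = []"
  by (cases xs) auto
lemma clen_enc[simp]: "clen (list_encode xs) = length xs"
  unfolding clen_def by (rule Least_equality) (auto simp: list_encode_0_iff)

lemma rec_ctl[rec_intros]: "total_rec f \<Longrightarrow> total_rec (\<lambda>n. ctl (f n))"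
  unfolding ctl_def by (intro rec_intros)
lemma rec_chd[rec_intros]: "total_rec f \<Longrightarrow> total_rec (\<lambda>n. chd (f n))"
  unfolding chd_def by (intro rec_intros)
lemma nrec_cdrop: "nrec (\<lambda>x. x) (\<lambda>x y r. ctl r) c k = cdrop c k"
  unfolding cdrop_def by (induction k) auto
lemma rec_cdrop[rec_intros]: "total_rec f \<Longrightarrow> total_rec g \<Longrightarrow> total_rec (\<lambda>n. cdrop (f n) (g n))"
proof -
  assume f: "total_rec f" and g: "total_rec g"
  have "total_rec2 (nrec (\<lambda>x. x) (\<lambda>x y r. ctl r))" by (rule rec_nrec) (intro rec_intros)+
  from rec2_app[OF this f g] show ?thesis unfolding nrec_cdrop .
qed
lemma rec_cnth[rec_intros]: "total_rec f \<Longrightarrow> total_rec g \<Longrightarrow> total_rec (\<lambda>n. cnth (f n) (g n))"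
  unfolding cnth_def by (intro rec_intros)
lemma rec_clen[rec_intros]: "total_rec f \<Longrightarrow> total_rec (\<lambda>n. clen (f n))"
proof -
  assume f: "total_rec f"
  have "total_rec (\<lambda>x. LEAST y. cdrop (nfst (npair x y)) (nsnd (npair x y)) = 0)"
  proof (rule rec_mu)
    show "total_rec (\<lambda>n. cdrop (nfst n) (nsnd n))" by (intro rec_intros)
    fix x
    have "cdrop x (clen x) = 0"
      using clen_enc[of "list_decode x"] cdrop_enc[of "list_decode x"] by simp
    thus "\<exists>y. cdrop (nfst (npair x y)) (nsnd (npair x y)) = 0" by auto
  qed
  hence "total_rec clen" unfolding clen_def by simp
  from rec_comp[OF this f] show ?thesis .
qed

lemma rec_pred_comp: "rec_pred P \<Longrightarrow> total_rec f \<Longrightarrow> rec_pred (\<lambda>n. P (f n))"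
  unfolding rec_pred_def using rec_comp[of "\<lambda>n. if P n then 0 else 1" f] by simp

definition leading_zeros :: "nat \<Rightarrow> nat" where "leading_zeros c = (LEAST l. clen c \<le> l \<or> cnth c l \<noteq> 0)"

lemma rec_leading_zeros[rec_intros]: "total_rec f \<Longrightarrow> total_rec (\<lambda>n. leading_zeros (f n))"
proof -
  assume f: "total_rec f"
  have "total_rec (\<lambda>x. LEAST y. (if clen (nfst (npair x y)) \<le> nsnd (npair x y) \<or> cnth (nfst (npair x y)) (nsnd (npair x y)) \<noteq> 0 then 0 else 1) = (0::nat))"
  proof (rule rec_mu)
    show "total_rec (\<lambda>z. if clen (nfst z) \<le> nsnd z \<or> cnth (nfst z) (nsnd z) \<noteq> 0 then 0 else 1)" by (intro rec_intros)
    fix x show "\<exists>y. (if clen (nfst (npair x y)) \<le> nsnd (npair x y) \<or> cnth (nfst (npair x y)) (nsnd (npair x y)) \<noteq> 0 then 0 else 1) = (0::nat)"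
      by (rule exI[of _ "clen x"]) simp
  qed
  moreover have "(\<lambda>x. LEAST y. (if clen (nfst (npair x y)) \<le> nsnd (npair x y) \<or> cnth (nfst (npair x y)) (nsnd (npair x y)) \<noteq> 0 then 0 else 1) = (0::nat)) = leading_zeros"
  proof (rule ext)
    fix x
    have e: "\<And>y. ((if clen x \<le> y \<or> cnth x y \<noteq> 0 then 0 else 1) = (0::nat)) = (clen x \<le> y \<or> cnth x y \<noteq> 0)" by simp
    show "(LEAST y. (if clen (nfst (npair x y)) \<le> nsnd (npair x y) \<or> cnth (nfst (npair x y)) (nsnd (npair x y)) \<noteq> 0 then 0 else 1) = (0::nat)) = leading_zeros x"
      unfolding leading_zeros_def prod_encode_inverse fst_conv snd_conv e ..
  qed
  ultimately have "total_rec leading_zeros" by simp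
  from rec_comp[OF this f] show ?thesis .
qed

lemma leading_zeros_wcode: "leading_zeros (wcode w) = length (takeWhile Not w)"
  unfolding leading_zeros_def wcode_def
proof (rule Least_equality)
  let ?n = "length (takeWhile Not w)"
  show "clen (list_encode (map (\<lambda>b. if b then 1 else 0) w)) \<le> ?n \<or> cnth (list_encode (map (\<lambda>b. if b then 1 else 0) w)) ?n \<noteq> 0"
  proof (cases "?n < length w")
    case True
    hence "w ! ?n" using nth_length_takeWhile[of Not w] by simp
    thus ?thesis using True by simp
  next
    case False thus ?thesis by simp
  qed
  fix l assume l: "clen (list_encode (map (\<lambda>b. if b then 1 else 0) w)) \<le> l \<or> cnth (list_encode (map (\<lambda>b. if b then 1 else 0) w)) l \<noteq> 0"
  show "?n \<le> l"
  proof (rule ccontr)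
    assume "\<not> ?n \<le> l"
    hence ln: "l < ?n" by simp
    hence lw: "l < length w" using length_takeWhile_le[of Not w] by linarith
    have "\<not> w ! l" using ln by (metis nth_mem set_takeWhileD takeWhile_nth)
    thus False using l lw by simp
  qed
qed

lemma clen_wcode[simp]: "clen (wcode w) = length w" by (simp add: wcode_def)
lemma cnth_wcode[simp]: "k < length w \<Longrightarrow> cnth (wcode w) k = (if w ! k then 1 else 0)" by (simp add: wcode_def)
lemma cdrop_wcode[simp]: "cdrop (wcode w) k = wcode (drop k w)" by (simp add: wcode_def drop_map)

lemma wcode_entry: "wcode (replicate i False @ [True]) = nrec (\<lambda>_. Suc (npair 1 0)) (\<lambda>x y r. Suc (npair 0 r)) 0 i"
  by (induction i) (simp_all add: wcode_def)

lemma rec_entry_code[rec_intros]: "total_rec f \<Longrightarrow> total_rec (\<lambda>n. wcode (replicate (f n) False @ [True]))"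
proof -
  assume f: "total_rec f"
  have "total_rec2 (nrec (\<lambda>_. Suc (npair 1 0)) (\<lambda>x y r. Suc (npair 0 r)))" by (rule rec_nrec) (intro rec_intros)+
  from rec2_app[OF this rec_const f] show ?thesis unfolding wcode_entry .
qed

section \<open>Closure properties of partial recursive functions\<close>

lemma partrec_total: "total_rec f \<Longrightarrow> (\<lambda>n. Some (f n)) \<in> partrec" unfolding total_rec_def .

lemma partrec_precomp: "F \<in> partrec \<Longrightarrow> total_rec g \<Longrightarrow> (\<lambda>n. F (g n)) \<in> partrec"
  unfolding total_rec_def using partrec.comp[of F "\<lambda>n. Some (g n)"] by simp

lemma partrec_postcomp: "F \<in> partrec \<Longrightarrow> total_rec h \<Longrightarrow> (\<lambda>n. map_option h (F n)) \<in> partrec"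
proof -
  assume a: "F \<in> partrec" "total_rec h"
  have "(\<lambda>n. Option.bind (F n) (\<lambda>n. Some (h n))) = (\<lambda>n. map_option h (F n))"
    by (rule ext, case_tac "F n") auto
  with partrec.comp[of "\<lambda>n. Some (h n)" F] a show ?thesis unfolding total_rec_def by simp
qed

lemma partrec_pair_input: "F \<in> partrec \<Longrightarrow> (\<lambda>n. map_option (\<lambda>a. npair n a) (F n)) \<in> partrec"
proof -
  assume a: "F \<in> partrec"
  have "(\<lambda>n. Option.bind (Some n) (\<lambda>a. Option.bind (F n) (\<lambda>b. Some (npair a b)))) = (\<lambda>n. map_option (\<lambda>a. npair n a) (F n))"
    by (rule ext, case_tac "F n") auto
  with partrec.pair[OF partrec.ident a] show ?thesis by simp
qed

definition guard0 :: "nat \<Rightarrow> nat option" where "guard0 x = (if x = 0 then Some 0 else None)"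
lemma partrec_guard0: "guard0 \<in> partrec"
proof -
  have "mu (\<lambda>n. Some (nfst n)) = guard0"
    by (rule ext) (auto simp: mu_def guard0_def)
  with partrec.minim[OF partrec.pfst] show ?thesis by simp
qed

lemma partrec_guard: "rec_pred P \<Longrightarrow> F \<in> partrec \<Longrightarrow> (\<lambda>n. if P n then F n else None) \<in> partrec"
proof -
  assume P: "rec_pred P" and F: "F \<in> partrec"
  have g: "(\<lambda>n. guard0 (if P n then 0 else 1)) \<in> partrec"
    by (rule partrec_precomp[OF partrec_guard0 P[unfolded rec_pred_def]])
  have "(\<lambda>n. map_option nsnd (Option.bind (guard0 (if P n then 0 else 1)) (\<lambda>a. Option.bind (F n) (\<lambda>b. Some (npair a b))))) \<in> partrec"
    by (rule partrec_postcomp[OF partrec.pair[OF g F]]) (intro rec_intros)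
  moreover have "(\<lambda>n. map_option nsnd (Option.bind (guard0 (if P n then 0 else 1)) (\<lambda>a. Option.bind (F n) (\<lambda>b. Some (npair a b)))))
     = (\<lambda>n. if P n then F n else None)"
    by (rule ext, case_tac "F n") (auto simp: guard0_def)
  ultimately show ?thesis by simp
qed

lemma partrec_if_default: "F \<in> partrec \<Longrightarrow> rec_pred P \<Longrightarrow> (\<lambda>n. if P n then F n else Some 0) \<in> partrec"
proof -
  assume F: "F \<in> partrec" and P: "rec_pred P"
  have nfst': "(\<lambda>m. F (nfst m)) \<in> partrec" by (rule partrec_precomp[OF F]) (intro rec_intros)
  have A: "prec (\<lambda>_. Some 0) (\<lambda>m. F (nfst m)) \<in> partrec" by (rule partrec.prim_rec[OF partrec.zero nfst'])
  have "(\<lambda>n. prec (\<lambda>_. Some 0) (\<lambda>m. F (nfst m)) (npair n (if P n then 1 else 0))) \<in> partrec"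
    by (rule partrec_precomp[OF A]) (intro rec_intros P)
  moreover have "(\<lambda>n. prec (\<lambda>_. Some 0) (\<lambda>m. F (nfst m)) (npair n (if P n then 1 else 0))) = (\<lambda>n. if P n then F n else Some 0)"
    by (rule ext) (simp add: prec_def)
  ultimately show ?thesis by simp
qed

lemma partrec_if: "rec_pred P \<Longrightarrow> F \<in> partrec \<Longrightarrow> G \<in> partrec \<Longrightarrow> (\<lambda>n. if P n then F n else G n) \<in> partrec"
proof -
  assume P: "rec_pred P" and F: "F \<in> partrec" and G: "G \<in> partrec"
  have a: "(\<lambda>n. if P n then F n else Some 0) \<in> partrec" by (rule partrec_if_default[OF F P])
  have b: "(\<lambda>n. if \<not> P n then G n else Some 0) \<in> partrec" by (rule partrec_if_default[OF G]) (intro rec_intros P)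
  have c: "(\<lambda>n. map_option (\<lambda>a. npair n a) (Option.bind (if P n then F n else Some 0) (\<lambda>a. Option.bind (if \<not> P n then G n else Some 0) (\<lambda>b. Some (npair a b))))) \<in> partrec"
    by (rule partrec_pair_input[OF partrec.pair[OF a b]])
  have d: "(\<lambda>n. map_option (\<lambda>m. if P (nfst m) then nfst (nsnd m) else nsnd (nsnd m)) (map_option (\<lambda>a. npair n a) (Option.bind (if P n then F n else Some 0) (\<lambda>a. Option.bind (if \<not> P n then G n else Some 0) (\<lambda>b. Some (npair a b)))))) \<in> partrec"
    by (rule partrec_postcomp[OF c]) (intro rec_intros rec_pred_comp[OF P])
  moreover have "(\<lambda>n. map_option (\<lambda>m. if P (nfst m) then nfst (nsnd m) else nsnd (nsnd m)) (map_option (\<lambda>a. npair n a) (Option.bind (if P n then F n else Some 0) (\<lambda>a. Option.bind (if \<not> P n then G n else Some 0) (\<lambda>b. Some (npair a b))))))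
     = (\<lambda>n. if P n then F n else G n)"
    by (rule ext, case_tac "F n", case_tac[!] "G n") auto
  ultimately show ?thesis by simp
qed

lemma partrec_bind: "F \<in> partrec \<Longrightarrow> G \<in> partrec \<Longrightarrow> (\<lambda>n. Option.bind (F n) (\<lambda>a. G (npair n a))) \<in> partrec"
proof -
  assume F: "F \<in> partrec" and G: "G \<in> partrec"
  have "(\<lambda>n. Option.bind (map_option (\<lambda>a. npair n a) (F n)) G) = (\<lambda>n. Option.bind (F n) (\<lambda>a. G (npair n a)))"
    by (rule ext, case_tac "F n") auto
  with partrec.comp[OF G partrec_pair_input[OF F]] show ?thesis by simp
qed

text \<open>values_code F x t is the code of the list F(x,0), ..., F(x,t-1), defined when all entries
  are defined; it is partial recursive in x and t (by primitive recursion running backwards).\<close>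
definition values_code :: "(nat \<Rightarrow> nat option) \<Rightarrow> nat \<Rightarrow> nat \<Rightarrow> nat option" where
  "values_code F x t = (if \<forall>k<t. F (npair x k) \<noteq> None then Some (list_encode (map (\<lambda>k. the (F (npair x k))) [0..<t])) else None)"

lemma values_code_prec_aux:
  assumes "y \<le> t"
  shows "prec_aux (\<lambda>_. Some 0)
     (\<lambda>m. map_option (\<lambda>z. Suc (npair (nsnd z) (nsnd (nsnd (nfst z)))))
        (map_option (\<lambda>a. npair m a) (F (npair (nfst (nfst m)) (nsnd (nfst m) - 1 - nfst (nsnd m)))))) (npair x t) y
   = (if \<forall>k. t - y \<le> k \<and> k < t \<longrightarrow> F (npair x k) \<noteq> None
      then Some (list_encode (map (\<lambda>k. the (F (npair x k))) [t - y..<t])) else None)"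
  using assms
proof (induction y)
  case 0 thus ?case by simp
next
  case (Suc y)
  define k0 where "k0 = t - Suc y"
  have k0: "k0 < t" "Suc k0 = t - y" "t - 1 - y = k0" using Suc.prems by (auto simp: k0_def)
  have ups: "[k0..<t] = k0 # [t - y..<t]" using k0 by (simp add: upt_conv_Cons)
  have iff: "(\<forall>k. k0 \<le> k \<and> k < t \<longrightarrow> F (npair x k) \<noteq> None) \<longleftrightarrow>
             F (npair x k0) \<noteq> None \<and> (\<forall>k. t - y \<le> k \<and> k < t \<longrightarrow> F (npair x k) \<noteq> None)"
    using k0 by (auto simp: le_Suc_eq) (metis Suc_leI le_antisym not_less_eq_eq)
  show ?case
    using Suc.IH[OF Suc_leD[OF Suc.prems]] k0 ups iff
    by (cases "F (npair x k0)") (auto simp: k0_def[symmetric])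
qed

lemma partrec_values: "F \<in> partrec \<Longrightarrow> (\<lambda>n. values_code F (nfst n) (nsnd n)) \<in> partrec"
proof -
  assume F: "F \<in> partrec"
  define g0 where "g0 = (\<lambda>m. map_option (\<lambda>z. Suc (npair (nsnd z) (nsnd (nsnd (nfst z)))))
        (map_option (\<lambda>a. npair m a) (F (npair (nfst (nfst m)) (nsnd (nfst m) - 1 - nfst (nsnd m))))))"
  have g0: "g0 \<in> partrec" unfolding g0_def
    by (intro partrec_postcomp partrec_pair_input partrec_precomp[OF F]) (intro rec_intros)+
  have P: "prec (\<lambda>_. Some 0) g0 \<in> partrec" by (rule partrec.prim_rec[OF partrec.zero g0])
  have "(\<lambda>n. prec (\<lambda>_. Some 0) g0 (npair n (nsnd n))) \<in> partrec" by (rule partrec_precomp[OF P]) (intro rec_intros)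
  moreover have "(\<lambda>n. prec (\<lambda>_. Some 0) g0 (npair n (nsnd n))) = (\<lambda>n. values_code F (nfst n) (nsnd n))"
  proof (rule ext)
    fix n
    obtain x t where n: "n = npair x t" by (metis prod_decode_inverse prod.collapse)
    show "prec (\<lambda>_. Some 0) g0 (npair n (nsnd n)) = values_code F (nfst n) (nsnd n)"
      using values_code_prec_aux[of t t F x] unfolding n g0_def values_code_def prec_def by simp
  qed
  ultimately show ?thesis by simp
qed

lemma partrec_values_at: "F \<in> partrec \<Longrightarrow> total_rec a \<Longrightarrow> total_rec b \<Longrightarrow> (\<lambda>n. values_code F (a n) (b n)) \<in> partrec"
  using partrec_precomp[OF partrec_values, of F "\<lambda>n. npair (a n) (b n)"] by (simp add: rec_pe)

definition ctake :: "nat \<Rightarrow> nat \<Rightarrow> nat" where "ctake t c = list_encode (map (cnth c) [0..<t])"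

lemma rec_ctake[rec_intros]: "total_rec f \<Longrightarrow> total_rec g \<Longrightarrow> total_rec (\<lambda>n. ctake (f n) (g n))"
proof -
  assume f: "total_rec f" and g: "total_rec g"
  have "(\<lambda>n. values_code (\<lambda>z. Some (cnth (nfst z) (nsnd z))) (g n) (f n)) \<in> partrec"
    by (rule partrec_values_at[OF partrec_total g f]) (intro rec_intros)
  moreover have "(\<lambda>n. values_code (\<lambda>z. Some (cnth (nfst z) (nsnd z))) (g n) (f n)) = (\<lambda>n. Some (ctake (f n) (g n)))"
    by (auto simp: values_code_def ctake_def)
  ultimately show ?thesis unfolding total_rec_def by simp
qed

section \<open>Computable functions on Baire space\<close>

lemma clen_pc[simp]: "clen (prefix_code p m) = m" by (simp add: prefix_code_def)
lemma cnth_pc[simp]: "i < m \<Longrightarrow> cnth (prefix_code p m) i = p i" by (simp add: prefix_code_def)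
lemma ctake_pc[simp]: "t \<le> m \<Longrightarrow> ctake t (prefix_code p m) = prefix_code p t"
  unfolding ctake_def prefix_code_def by (intro arg_cong[where f=list_encode] map_cong) auto

lemma computableI:
  assumes "\<psi> \<in> partrec"
    and "\<And>p q n. F p = Some q \<Longrightarrow> \<exists>m. \<psi> (npair (prefix_code p m) n) = Some (q n)"
    and "\<And>p q n m v. F p = Some q \<Longrightarrow> \<psi> (npair (prefix_code p m) n) = Some v \<Longrightarrow> v = q n"
  shows "computableB F"
  unfolding computableB_def using assms by blast

lemma computableE:
  assumes "computableB F"
  obtains \<psi> where "\<psi> \<in> partrec"
    and "\<And>p q n. F p = Some q \<Longrightarrow> \<exists>m. \<psi> (npair (prefix_code p m) n) = Some (q n)"
    and "\<And>p q n m v. F p = Some q \<Longrightarrow> \<psi> (npair (prefix_code p m) n) = Some v \<Longrightarrow> v = q n"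
  using assms unfolding computableB_def by blast

lemma computable_map:
  assumes "total_rec \<phi>" "total_rec h"
  shows "computableB (\<lambda>p. Some (\<lambda>k. h (npair k (p (\<phi> k)))))"
proof (rule computableI)
  let ?\<psi> = "\<lambda>x. if \<phi> (nsnd x) < clen (nfst x) then Some (h (npair (nsnd x) (cnth (nfst x) (\<phi> (nsnd x))))) else None"
  show "?\<psi> \<in> partrec" by (intro partrec_guard partrec_total) (intro rec_intros assms rec_comp[OF assms(1)] rec_comp[OF assms(2)])+
  fix p q n
  assume "Some (\<lambda>k. h (npair k (p (\<phi> k)))) = Some q"
  hence q: "q = (\<lambda>k. h (npair k (p (\<phi> k))))" by simp
  show "\<exists>m. ?\<psi> (npair (prefix_code p m) n) = Some (q n)"
    by (rule exI[of _ "Suc (\<phi> n)"]) (simp add: q)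
  fix m v
  assume "?\<psi> (npair (prefix_code p m) n) = Some v"
  thus "v = q n" by (simp add: q split: if_splits)
qed

lemma computable_id: "computableB (\<lambda>p. Some p)"
  using computable_map[of "\<lambda>k. k" "\<lambda>z. nsnd z"] by (simp add: rec_intros)

lemma computable_const: "computableB (\<lambda>p. Some (\<lambda>_. c))"
  using computable_map[of "\<lambda>k. k" "\<lambda>z. c"] by (simp add: rec_intros)

definition PAIR :: "(baire \<Rightarrow> baire option) \<Rightarrow> (baire \<Rightarrow> baire option) \<Rightarrow> baire \<Rightarrow> baire option" where
  "PAIR F G p = Option.bind (F p) (\<lambda>a. Option.bind (G p) (\<lambda>b. Some (pairB a b)))"

lemma computable_PAIR:
  assumes "computableB F" "computableB G"
  shows "computableB (PAIR F G)"
proof -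
  obtain \<psi>1 where p1: "\<psi>1 \<in> partrec"
    and e1: "\<And>p q n. F p = Some q \<Longrightarrow> \<exists>m. \<psi>1 (npair (prefix_code p m) n) = Some (q n)"
    and c1: "\<And>p q n m v. F p = Some q \<Longrightarrow> \<psi>1 (npair (prefix_code p m) n) = Some v \<Longrightarrow> v = q n"
    using computableE[OF assms(1)] by blast
  obtain \<psi>2 where p2: "\<psi>2 \<in> partrec"
    and e2: "\<And>p q n. G p = Some q \<Longrightarrow> \<exists>m. \<psi>2 (npair (prefix_code p m) n) = Some (q n)"
    and c2: "\<And>p q n m v. G p = Some q \<Longrightarrow> \<psi>2 (npair (prefix_code p m) n) = Some v \<Longrightarrow> v = q n"
    using computableE[OF assms(2)] by blast
  show ?thesis
  proof (rule computableI)
    let ?\<psi> = "\<lambda>x. if even (nsnd x) then \<psi>1 (npair (nfst x) (nsnd x div 2)) else \<psi>2 (npair (nfst x) (nsnd x div 2))"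
    show "?\<psi> \<in> partrec" by (intro partrec_if partrec_precomp[OF p1] partrec_precomp[OF p2]) (intro rec_intros)+
    fix p q n
    assume "PAIR F G p = Some q"
    then obtain a b where a: "F p = Some a" and b: "G p = Some b" and q: "q = pairB a b"
      by (auto simp: PAIR_def split: Option.bind_splits)
    show "\<exists>m. ?\<psi> (npair (prefix_code p m) n) = Some (q n)"
    proof (cases "even n")
      case True
      from e1[OF a, of "n div 2"] True show ?thesis by (auto simp: q pairB_def)
    next
      case False
      from e2[OF b, of "n div 2"] False show ?thesis by (auto simp: q pairB_def)
    qed
    fix m v
    assume "?\<psi> (npair (prefix_code p m) n) = Some v"
    thus "v = q n" using c1[OF a] c2[OF b] by (auto simp: q pairB_def split: if_splits)
  qed
qed

text \<open>Entries of a list are bounded by its code; hence a finite list of moduli can be coded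
  into a prefix length.\<close>
lemma nth_le_list_encode: "k < length xs \<Longrightarrow> xs ! k \<le> list_encode xs"
proof (induction xs arbitrary: k)
  case Nil thus ?case by simp
next
  case (Cons x xs)
  show ?case
  proof (cases k)
    case 0 thus ?thesis using le_prod_encode_1[of x "list_encode xs"] by simp
  next
    case (Suc k')
    with Cons have "xs ! k' \<le> list_encode xs" by simp
    thus ?thesis using Suc le_prod_encode_2[of "list_encode xs" x] by simp
  qed
qed

lemma cnth_le: "k < clen M \<Longrightarrow> cnth M k \<le> M"
  using nth_le_list_encode[of k "list_decode M"] cnth_enc[of k "list_decode M"] clen_enc[of "list_decode M"]
  by simp

text \<open>On input prefix code c and output position n,
  the machine reads the prefix length m as a list of moduli: the i-th digit of the intermediate
  result is computed by psi1 from the first cnth m i input digits, for i < clen m; then psi2 is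
  run on the resulting prefix of the intermediate result.\<close>
definition inner_digit :: "(nat \<Rightarrow> nat option) \<Rightarrow> nat \<Rightarrow> nat option" where
  "inner_digit \<psi>1 z = \<psi>1 (npair (ctake (cnth (clen (nfst z)) (nsnd z)) (nfst z)) (nsnd z))"

definition bind_machine :: "(nat \<Rightarrow> nat option) \<Rightarrow> (nat \<Rightarrow> nat option) \<Rightarrow> nat \<Rightarrow> nat option" where
  "bind_machine \<psi>1 \<psi>2 x = Option.bind (values_code (inner_digit \<psi>1) (nfst x) (clen (clen (nfst x))))
     (\<lambda>a. \<psi>2 (npair a (nsnd x)))"

lemma partrec_bind_machine:
  assumes "\<psi>1 \<in> partrec" "\<psi>2 \<in> partrec"
  shows "bind_machine \<psi>1 \<psi>2 \<in> partrec"
proof -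
  have "inner_digit \<psi>1 \<in> partrec"
    unfolding inner_digit_def[abs_def] by (rule partrec_precomp[OF assms(1)]) (intro rec_intros)
  hence "(\<lambda>x. values_code (inner_digit \<psi>1) (nfst x) (clen (clen (nfst x)))) \<in> partrec"
    by (rule partrec_values_at) (intro rec_intros)+
  hence "(\<lambda>x. Option.bind (values_code (inner_digit \<psi>1) (nfst x) (clen (clen (nfst x))))
      (\<lambda>a. (\<lambda>z. \<psi>2 (npair (nsnd z) (nsnd (nfst z)))) (npair x a))) \<in> partrec"
    by (rule partrec_bind) (rule partrec_precomp[OF assms(2)], intro rec_intros)
  thus ?thesis unfolding bind_machine_def[abs_def] by simp
qed

lemma bind_machine_complete:
  assumes e1: "\<And>k. \<exists>m. \<psi>1 (npair (prefix_code p m) k) = Some (q k)"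
    and j: "\<psi>2 (npair (prefix_code q j) n) = Some v"
  shows "\<exists>m. bind_machine \<psi>1 \<psi>2 (npair (prefix_code p m) n) = Some v"
proof -
  obtain mk where mk: "\<And>k. \<psi>1 (npair (prefix_code p (mk k)) k) = Some (q k)" using e1 by metis
  define M where "M = list_encode (map mk [0..<j])"
  have lenM: "clen M = j" by (simp add: M_def)
  have nthM: "k < j \<Longrightarrow> cnth M k = mk k" for k by (simp add: M_def)
  have leM: "k < j \<Longrightarrow> mk k \<le> M" for k
    using nth_le_list_encode[of k "map mk [0..<j]"] by (simp add: M_def)
  have "k < j \<Longrightarrow> inner_digit \<psi>1 (npair (prefix_code p M) k) = Some (q k)" for k
    using mk[of k] by (simp add: inner_digit_def lenM nthM leM)
  hence "values_code (inner_digit \<psi>1) (prefix_code p M) (clen M) = Some (prefix_code q j)"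
    by (auto simp: values_code_def lenM prefix_code_def intro!: arg_cong[where f=list_encode] map_cong)
  with j show ?thesis by (intro exI[of _ M]) (simp add: bind_machine_def)
qed

lemma bind_machine_sound:
  assumes c1: "\<And>k m v. \<psi>1 (npair (prefix_code p m) k) = Some v \<Longrightarrow> v = q k"
    and h: "bind_machine \<psi>1 \<psi>2 (npair (prefix_code p m) n) = Some v"
  shows "\<psi>2 (npair (prefix_code q (clen m)) n) = Some v"
proof -
  obtain qc where qc: "values_code (inner_digit \<psi>1) (prefix_code p m) (clen m) = Some qc"
    and v: "\<psi>2 (npair qc n) = Some v"
    using h by (auto simp: bind_machine_def split: Option.bind_splits)
  have all: "\<forall>k<clen m. inner_digit \<psi>1 (npair (prefix_code p m) k) \<noteq> None"
    and qc_eq: "qc = list_encode (map (\<lambda>k. the (inner_digit \<psi>1 (npair (prefix_code p m) k))) [0..<clen m])"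
    using qc by (auto simp: values_code_def split: if_splits)
  have "the (inner_digit \<psi>1 (npair (prefix_code p m) k)) = q k" if k: "k < clen m" for k
  proof -
    obtain w where w: "inner_digit \<psi>1 (npair (prefix_code p m) k) = Some w" using all k by blast
    have "\<psi>1 (npair (prefix_code p (cnth m k)) k) = Some w"
      using w cnth_le[OF k] by (simp add: inner_digit_def)
    with c1 w show ?thesis by simp
  qed
  hence "qc = prefix_code q (clen m)"
    unfolding qc_eq prefix_code_def by (auto intro!: arg_cong[where f=list_encode] map_cong)
  with v show ?thesis by simp
qed

lemma computable_bind:
  assumes "computableB F" "computableB G"
  shows "computableB (\<lambda>p. Option.bind (F p) G)"
proof -
  obtain \<psi>1 where p1: "\<psi>1 \<in> partrec"
    and e1: "\<And>p q n. F p = Some q \<Longrightarrow> \<exists>m. \<psi>1 (npair (prefix_code p m) n) = Some (q n)"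
    and c1: "\<And>p q n m v. F p = Some q \<Longrightarrow> \<psi>1 (npair (prefix_code p m) n) = Some v \<Longrightarrow> v = q n"
    using computableE[OF assms(1)] by blast
  obtain \<psi>2 where p2: "\<psi>2 \<in> partrec"
    and e2: "\<And>p q n. G p = Some q \<Longrightarrow> \<exists>m. \<psi>2 (npair (prefix_code p m) n) = Some (q n)"
    and c2: "\<And>p q n m v. G p = Some q \<Longrightarrow> \<psi>2 (npair (prefix_code p m) n) = Some v \<Longrightarrow> v = q n"
    using computableE[OF assms(2)] by blast
  show ?thesis
  proof (rule computableI[OF partrec_bind_machine[OF p1 p2]])
    fix p r n
    assume "Option.bind (F p) G = Some r"
    then obtain q where a: "F p = Some q" and b: "G q = Some r" by (auto split: Option.bind_splits)
    obtain j where "\<psi>2 (npair (prefix_code q j) n) = Some (r n)" using e2[OF b] by blast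
    with e1[OF a] show "\<exists>m. bind_machine \<psi>1 \<psi>2 (npair (prefix_code p m) n) = Some (r n)"
      by (rule bind_machine_complete)
    fix m v
    assume "bind_machine \<psi>1 \<psi>2 (npair (prefix_code p m) n) = Some v"
    with c1[OF a] have "\<psi>2 (npair (prefix_code q (clen m)) n) = Some v" by (rule bind_machine_sound)
    with c2[OF b] show "v = r n" by simp
  qed
qed

definition par_map :: "(baire \<Rightarrow> baire option) \<Rightarrow> baire \<Rightarrow> baire option" where
  "par_map F p = (if \<forall>i. F (compB i p) \<noteq> None then Some (\<lambda>k. the (F (compB (nfst k) p)) (nsnd k)) else None)"

lemma par_map_Some: "(\<And>i. F (compB i p) = Some (Q i)) \<Longrightarrow> par_map F p = Some (\<lambda>k. Q (nfst k) (nsnd k))"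
  by (simp add: par_map_def)

lemma compB_pack[simp]: "compB i (\<lambda>k. Q (nfst k) (nsnd k)) = Q i" by (simp add: compB_def)

lemma npair_mono2: "l \<le> m \<Longrightarrow> npair i l \<le> npair i m"
proof -
  assume "l \<le> m"
  have "triangle (i + l) \<le> triangle (i + m)"
    unfolding triangle_def using \<open>l \<le> m\<close> by (intro div_le_mono mult_le_mono) auto
  thus ?thesis by (simp add: prod_encode_def)
qed

definition component_digit :: "nat \<Rightarrow> nat option" where
  "component_digit z = (if npair (nsnd (nfst z)) (nsnd z) < clen (nfst (nfst z))
     then Some (cnth (nfst (nfst z)) (npair (nsnd (nfst z)) (nsnd z))) else None)"

definition component_prefix :: "nat \<Rightarrow> nat option" where
  "component_prefix x = values_code component_digit (npair (nfst x) (nfst (nsnd x))) (nfst (clen (nfst x)))"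

lemma partrec_component_prefix: "component_prefix \<in> partrec"
proof -
  have "component_digit \<in> partrec"
    unfolding component_digit_def[abs_def] by (intro partrec_guard partrec_total) (intro rec_intros)+
  thus ?thesis unfolding component_prefix_def[abs_def] by (rule partrec_values_at) (intro rec_intros)+
qed

lemma values_component_digit:
  "(\<forall>l<t. npair i l < clen c) \<Longrightarrow>
    values_code component_digit (npair c i) t = Some (list_encode (map (\<lambda>l. cnth c (npair i l)) [0..<t]))"
  unfolding values_code_def component_digit_def by (auto intro!: arg_cong[where f=list_encode] map_cong)

lemma component_prefix_long:
  "component_prefix (npair (prefix_code p (npair m (Suc (npair i m)))) (npair i k)) = Some (prefix_code (compB i p) m)"
proof -
  have "l < m \<Longrightarrow> npair i l < npair m (Suc (npair i m))" for l
    using npair_mono2[of l m i] le_prod_encode_2[of "Suc (npair i m)" m] by linarith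
  thus ?thesis unfolding component_prefix_def
    by (subst values_component_digit) (auto simp: prefix_code_def compB_def intro!: arg_cong[where f=list_encode] map_cong)
qed

lemma component_prefix_Some:
  assumes "component_prefix (npair (prefix_code p m) (npair i k)) = Some sc"
  shows "sc = prefix_code (compB i p) (nfst m)"
proof -
  have "\<forall>l<nfst m. component_digit (npair (npair (prefix_code p m) i) l) \<noteq> None"
    using assms by (auto simp: component_prefix_def values_code_def split: if_splits)
  hence "\<forall>l<nfst m. npair i l < m" by (auto simp: component_digit_def split: if_splits)
  thus ?thesis using assms
    by (auto simp: component_prefix_def values_component_digit prefix_code_def compB_def
        intro!: arg_cong[where f=list_encode] map_cong)
qed

definition par_machine :: "(nat \<Rightarrow> nat option) \<Rightarrow> nat \<Rightarrow> nat option" where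
  "par_machine \<psi> x = Option.bind (component_prefix x) (\<lambda>a. \<psi> (npair a (nsnd (nsnd x))))"

lemma computable_par:
  assumes "computableB F"
  shows "computableB (par_map F)"
proof -
  obtain \<psi> where p: "\<psi> \<in> partrec"
    and e: "\<And>p q n. F p = Some q \<Longrightarrow> \<exists>m. \<psi> (npair (prefix_code p m) n) = Some (q n)"
    and c: "\<And>p q n m v. F p = Some q \<Longrightarrow> \<psi> (npair (prefix_code p m) n) = Some v \<Longrightarrow> v = q n"
    using computableE[OF assms(1)] by blast
  have "(\<lambda>x. Option.bind (component_prefix x) (\<lambda>a. (\<lambda>z. \<psi> (npair (nsnd z) (nsnd (nsnd (nfst z))))) (npair x a)))
      \<in> partrec"
    by (rule partrec_bind[OF partrec_component_prefix]) (rule partrec_precomp[OF p], intro rec_intros)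
  hence pm: "par_machine \<psi> \<in> partrec" unfolding par_machine_def[abs_def] by simp
  show ?thesis
  proof (rule computableI[OF pm])
    fix p q n
    assume "par_map F p = Some q"
    hence all: "\<forall>i. F (compB i p) \<noteq> None" and q: "q = (\<lambda>k. the (F (compB (nfst k) p)) (nsnd k))"
      by (auto simp: par_map_def split: if_splits)
    obtain i k where n: "n = npair i k" by (metis prod_decode_inverse prod.collapse)
    obtain qi where qi: "F (compB i p) = Some qi" using all by blast
    obtain m where m: "\<psi> (npair (prefix_code (compB i p) m) k) = Some (qi k)" using e[OF qi] by blast
    have "par_machine \<psi> (npair (prefix_code p (npair m (Suc (npair i m)))) n) = Some (qi k)"
      using m component_prefix_long[of p m i k] by (simp add: par_machine_def n)
    thus "\<exists>m. par_machine \<psi> (npair (prefix_code p m) n) = Some (q n)" by (auto simp: q n qi)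
    fix m v
    assume "par_machine \<psi> (npair (prefix_code p m) n) = Some v"
    then obtain sc where "component_prefix (npair (prefix_code p m) (npair i k)) = Some sc"
      and v: "\<psi> (npair sc k) = Some v"
      by (auto simp: par_machine_def n split: Option.bind_splits)
    with c[OF qi] component_prefix_Some show "v = q n" by (fastforce simp: q n qi)
  qed
qed

section \<open>Plays\<close>

definition pref :: "cantor \<Rightarrow> nat \<Rightarrow> bool list" where "pref x n = map x [0..<n]"

lemma length_pref[simp]: "length (pref x n) = n" by (simp add: pref_def)
lemma pref_nth[simp]: "k < n \<Longrightarrow> pref x n ! k = x k" by (simp add: pref_def)
lemma take_pref[simp]: "k \<le> n \<Longrightarrow> take k (pref x n) = pref x k"
  by (simp add: pref_def take_map min_def)

lemma play_pre_length[simp]: "length (play_pre s h n) = n"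
  by (induction n) (auto simp: Let_def)

lemma play_pre_take: "m \<le> n \<Longrightarrow> take m (play_pre s h n) = play_pre s h m"
proof (induction n)
  case 0 thus ?case by simp
next
  case (Suc n)
  show ?case
  proof (cases "m = Suc n")
    case True thus ?thesis by (simp add: Let_def)
  next
    case False
    with Suc.prems have "m \<le> n" by simp
    thus ?thesis using Suc.IH by (simp add: Let_def)
  qed
qed

lemma play_pre_map: "play_pre s h n = pref (play s h) n"
proof (rule nth_equalityI)
  show "length (play_pre s h n) = length (pref (play s h) n)" by simp
  fix k assume "k < length (play_pre s h n)"
  hence k: "Suc k \<le> n" by simp
  have "play_pre s h n ! k = take (Suc k) (play_pre s h n) ! k" by simp
  also have "\<dots> = play_pre s h (Suc k) ! k" using play_pre_take[OF k] by simp
  finally show "play_pre s h n ! k = pref (play s h) n ! k" using k by (simp add: play_def)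
qed

lemma play_rec: "play s h n = (if n < length h then h ! n else s (pref (play s h) n))"
proof -
  have "play s h n = play_pre s h (Suc n) ! n" by (simp add: play_def)
  also have "\<dots> = (if n < length h then h ! n else s (play_pre s h n))"
    by (simp add: Let_def nth_append)
  finally show ?thesis by (simp add: play_pre_map)
qed

lemma play_unique:
  assumes "\<And>n. x n = (if n < length h then h ! n else s (pref x n))"
  shows "play s h = x"
proof -
  have "\<forall>k<n. play s h k = x k" for n
  proof (induction n)
    case 0 thus ?case by simp
  next
    case (Suc n)
    have "pref (play s h) n = pref x n" using Suc.IH by (simp add: pref_def)
    hence "play s h n = x n" using play_rec[of s h n] assms[of n] by simp
    thus ?case using Suc.IH less_Suc_eq by auto
  qed
  thus ?thesis by auto
qed

lemma pref_play_hist: "n \<le> length h \<Longrightarrow> pref (play s h) n = take n h"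
  by (rule nth_equalityI) (auto simp: play_rec[of s h])

lemma pref_prepend: "length v \<le> n \<Longrightarrow> pref (prepend v y) n = v @ pref y (n - length v)"
  by (rule nth_equalityI) (auto simp: prepend_def nth_append)

lemma pref_prepend_le: "n \<le> length v \<Longrightarrow> pref (prepend v y) n = take n v"
  by (rule nth_equalityI) (auto simp: prepend_def)

lemma play_append: "play s (v @ w) = prepend v (play (\<lambda>u. s (v @ u)) w)"
proof (rule play_unique)
  fix n
  let ?Y = "play (\<lambda>u. s (v @ u)) w"
  show "prepend v ?Y n = (if n < length (v @ w) then (v @ w) ! n else s (pref (prepend v ?Y) n))"
  proof (cases "n < length v")
    case True thus ?thesis by (simp add: prepend_def nth_append)
  next
    case False
    hence "prepend v ?Y n = ?Y (n - length v)" by (simp add: prepend_def)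
    also have "\<dots> = (if n - length v < length w then w ! (n - length v) else s (v @ pref ?Y (n - length v)))"
      by (subst play_rec) simp
    finally show ?thesis using False by (auto simp: nth_append pref_prepend)
  qed
qed

lemma play_nil_hist: "play s v = prepend v (play (\<lambda>u. s (v @ u)) [])"
  using play_append[of s v "[]"] by simp

lemma play_step: "play s w = play s (w @ [s w])"
proof (rule sym, rule play_unique)
  fix n
  show "play s w n = (if n < length (w @ [s w]) then (w @ [s w]) ! n else s (pref (play s w) n))"
  proof (cases "n < length w")
    case True thus ?thesis by (simp add: play_rec[of s w n] nth_append)
  next
    case False
    show ?thesis
    proof (cases "n = length w")
      case True thus ?thesis using play_rec[of s w "length w"] pref_play_hist[of "length w" w s] by simp
    next
      case False2: False
      with False show ?thesis by (simp add: play_rec[of s w n])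
    qed
  qed
qed

lemma prepend_pref: "prepend (pref x n) (\<lambda>k. x (k + n)) = x"
  by (rule ext) (simp add: prepend_def)

section \<open>Uniformly winning strategy profiles\<close>

text \<open>wins b d W: the player who wants the play to lie in W exactly if b (player 1 for b = True,
  player 2 for b = False) has a winning strategy.\<close>
definition wins :: "bool \<Rightarrow> (bool list \<Rightarrow> bool) \<Rightarrow> cantor set \<Rightarrow> bool" where
  "wins b d W \<longleftrightarrow> (\<exists>\<sigma>. \<forall>\<tau>. (play (\<lambda>w. if d w = b then \<sigma> w else \<tau> w) [] \<in> W) = b)"

lemma wins_True: "wins True d W = p1_wins d W"
  by (simp add: wins_def p1_wins_def)

lemma wins_False: "wins False d W = p2_wins d W"
proof -
  have e: "\<And>\<sigma> \<tau>. (\<lambda>w. if d w = False then \<sigma> w else \<tau> w) = (\<lambda>w. if d w then \<tau> w else \<sigma> w)"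
    by auto
  show ?thesis unfolding wins_def p2_wins_def e by auto
qed

lemma not_both: "\<not> (p1_wins d W \<and> p2_wins d W)"
  unfolding p1_wins_def p2_wins_def by blast

definition sub_turn :: "(bool list \<Rightarrow> bool) \<Rightarrow> bool list \<Rightarrow> bool list \<Rightarrow> bool" where
  "sub_turn d v = (\<lambda>w. d (v @ w))"
definition sub_win :: "cantor set \<Rightarrow> bool list \<Rightarrow> cantor set" where
  "sub_win W v = {x. prepend v x \<in> W}"
definition winner :: "(bool list \<Rightarrow> bool) \<Rightarrow> cantor set \<Rightarrow> bool list \<Rightarrow> bool" where
  "winner d W v \<longleftrightarrow> p1_wins (sub_turn d v) (sub_win W v)"

lemma follow:
  assumes pre: "pref X (length hst) = hst"
    and fol: "\<And>k. length hst \<le> k \<Longrightarrow> d (pref X k) = b \<Longrightarrow> X k = \<sigma> (drop (length hst) (pref X k))"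
    and win: "\<And>\<tau>. (play (\<lambda>w. if d (hst @ w) = b then \<sigma> w else \<tau> w) [] \<in> sub_win W hst) = b"
  shows "(X \<in> W) = b"
proof -
  define l0 where "l0 = length hst"
  define z where "z = (\<lambda>n. X (n + l0))"
  have X: "X = prepend hst z" using prepend_pref[of X l0] pre by (simp add: z_def l0_def)
  have pz: "pref X (l0 + n) = hst @ pref z n" for n
    using pref_prepend[of hst "l0 + n" z] X by (simp add: l0_def)
  have "play (\<lambda>w. if d (hst @ w) = b then \<sigma> w else z (length w)) [] = z"
  proof (rule play_unique)
    fix n
    have "z n = X (l0 + n)" by (simp add: z_def add.commute)
    show "z n = (if n < length [] then [] ! n else (if d (hst @ pref z n) = b then \<sigma> (pref z n) else z (length (pref z n))))"
      using fol[of "l0 + n"] pz[of n] \<open>z n = X (l0 + n)\<close> by (auto simp: l0_def)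
  qed
  with win[of "\<lambda>w. z (length w)"] have "(z \<in> sub_win W hst) = b" by simp
  thus ?thesis using X by (simp add: sub_win_def)
qed

text \<open>Gluing a selection sigma of winning strategies, one for every subgame (sigma v wins the
  subgame at v for its winner), into a single profile.  At history w the glued profile plays
  sigma v0 for the shortest prefix v0 of w such that w is consistent with sigma v0 after v0.
  Along any play following the glued profile this anchor never moves, so the winner of a
  subgame wins it by following the glued profile.\<close>
locale winning_selection =
  fixes d :: "bool list \<Rightarrow> bool" and W :: "cantor set" and \<sigma> :: "bool list \<Rightarrow> bool list \<Rightarrow> bool"
  assumes selection_wins: "\<And>v \<tau>. (play (\<lambda>w. if d (v @ w) = winner d W v then \<sigma> v w else \<tau> w) []
      \<in> sub_win W v) = winner d W v"
begin

definition consistent :: "bool list \<Rightarrow> bool list \<Rightarrow> bool" where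
  "consistent v w \<longleftrightarrow> take (length v) w = v \<and> length v \<le> length w \<and>
     (\<forall>k. length v \<le> k \<and> k < length w \<and> d (take k w) = winner d W v
        \<longrightarrow> w ! k = \<sigma> v (drop (length v) (take k w)))"

definition anchor :: "bool list \<Rightarrow> nat" where
  "anchor w = (LEAST l. consistent (take l w) w)"

definition glued :: "bool list \<Rightarrow> bool" where
  "glued w = \<sigma> (take (anchor w) w) (drop (anchor w) w)"

lemma consistent_self: "consistent w w"
  unfolding consistent_def by auto

lemma consistentD: "consistent v w \<Longrightarrow> length v \<le> k \<Longrightarrow> k < length w \<Longrightarrow> d (take k w) = winner d W v
    \<Longrightarrow> w ! k = \<sigma> v (drop (length v) (take k w))"
  unfolding consistent_def by blast

lemma consistent_take:
  assumes c: "consistent a w" and an: "length a \<le> n" and nw: "n \<le> length w"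
  shows "consistent a (take n w)"
  unfolding consistent_def
proof (intro conjI allI impI)
  show "take (length a) (take n w) = a" using c an by (simp add: consistent_def min_def)
  show "length a \<le> length (take n w)" using an nw by simp
  fix k assume k: "length a \<le> k \<and> k < length (take n w) \<and> d (take k (take n w)) = winner d W a"
  hence "k < n" "k < length w" by auto
  with k have "w ! k = \<sigma> a (drop (length a) (take k w))" using consistentD[OF c] by (simp add: min_def)
  thus "take n w ! k = \<sigma> a (drop (length a) (take k (take n w)))" using \<open>k < n\<close> by (simp add: min_def)
qed

lemma anchor_consistent: "consistent (take (anchor w) w) w"
  unfolding anchor_def by (rule LeastI[of _ "length w"]) (simp add: consistent_self)

lemma anchor_le: "anchor w \<le> length w"
  unfolding anchor_def by (rule Least_le) (simp add: consistent_self)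

text \<open>If v is consistent with the strategy chosen at v0, then the winner at v0 still wins at v,
  by continuing with that strategy.\<close>
lemma consistent_wins:
  assumes c: "consistent v0 v"
  shows "wins (winner d W v0) (sub_turn d v) (sub_win W v)"
proof -
  let ?b = "winner d W v0"
  let ?l0 = "length v0"
  have l0v: "?l0 \<le> length v" using c by (simp add: consistent_def)
  show ?thesis unfolding wins_def
  proof (rule exI[of _ "\<lambda>w. \<sigma> v0 (drop ?l0 v @ w)"], rule allI)
    fix \<tau>
    define y where "y = play (\<lambda>w. if sub_turn d v w = ?b then \<sigma> v0 (drop ?l0 v @ w) else \<tau> w) []"
    define X where "X = prepend v y"
    have "(X \<in> W) = ?b"
    proof (rule follow[where hst=v0 and \<sigma>="\<sigma> v0" and d=d])
      show "pref X (length v0) = v0"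
        using c pref_prepend_le[of ?l0 v y] l0v by (simp add: X_def consistent_def)
      show "\<And>\<tau>. (play (\<lambda>w. if d (v0 @ w) = ?b then \<sigma> v0 w else \<tau> w) [] \<in> sub_win W v0) = ?b"
        by (rule selection_wins)
      fix k assume k: "length v0 \<le> k" "d (pref X k) = ?b"
      show "X k = \<sigma> v0 (drop (length v0) (pref X k))"
      proof (cases "k < length v")
        case True
        then have "pref X k = take k v" by (simp add: X_def pref_prepend_le)
        moreover have "X k = v ! k" using True by (simp add: X_def prepend_def)
        ultimately show ?thesis using consistentD[OF c k(1) True] k(2) by simp
      next
        case False
        then have pk: "pref X k = v @ pref y (k - length v)" by (simp add: X_def pref_prepend)
        have "X k = y (k - length v)" using False by (simp add: X_def prepend_def)
        also have "\<dots> = (if sub_turn d v (pref y (k - length v)) = ?b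
            then \<sigma> v0 (drop ?l0 v @ pref y (k - length v)) else \<tau> (pref y (k - length v)))"
          unfolding y_def by (subst play_rec) simp
        also have "\<dots> = \<sigma> v0 (drop ?l0 (pref X k))" using k(2) pk l0v by (simp add: sub_turn_def)
        finally show ?thesis .
      qed
    qed
    thus "(play (\<lambda>w. if sub_turn d v w = ?b then \<sigma> v0 (drop ?l0 v @ w) else \<tau> w) [] \<in> sub_win W v) = ?b"
      by (simp add: X_def sub_win_def y_def)
  qed
qed

lemma consistent_same_winner:
  assumes "consistent v0 v"
  shows "winner d W v0 = winner d W v"
proof (cases "winner d W v0")
  case True
  with consistent_wins[OF assms] show ?thesis by (simp add: wins_True winner_def)
next
  case False
  with consistent_wins[OF assms] have "p2_wins (sub_turn d v) (sub_win W v)" by (simp add: wins_False)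
  thus ?thesis using False not_both by (auto simp: winner_def)
qed

text \<open>An extension w of v that is consistent with the strategy anchored at v has the same
  anchor as v: a shorter consistent anchor for w would also be one for v.\<close>
lemma anchor_extend:
  assumes pre: "take (length v) w = v" and len: "length v \<le> length w"
    and c: "consistent (take (anchor v) v) w"
  shows "anchor w = anchor v"
  unfolding anchor_def[of w]
proof (rule Least_equality)
  have "take (anchor v) w = take (anchor v) v" using pre anchor_le[of v] by (metis min.absorb1 take_take)
  thus "consistent (take (anchor v) w) w" using c by simp
  fix l assume cl: "consistent (take l w) w"
  show "anchor v \<le> l"
  proof (rule ccontr)
    assume "\<not> anchor v \<le> l"
    hence ll: "l < anchor v" by simp
    have "consistent (take l w) (take (length v) w)"
      by (rule consistent_take[OF cl]) (use ll anchor_le[of v] len in auto)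
    moreover have "take l w = take l v"
      using pre ll anchor_le[of v] by (metis less_imp_le_nat min.absorb1 order.trans take_take)
    ultimately have "consistent (take l v) v" using pre by simp
    hence "anchor v \<le> l" unfolding anchor_def by (rule Least_le)
    with ll show False by simp
  qed
qed

text \<open>Invariant of a play x from history v in which the winner at v follows the glued profile:
  beyond v, every prefix of x has the same anchor as v.\<close>
lemma anchor_stable:
  fixes v :: "bool list" and x :: cantor
  assumes px: "\<And>n. n \<le> length v \<Longrightarrow> pref x n = take n v"
    and xge: "\<And>k. length v \<le> k \<Longrightarrow> d (pref x k) = winner d W v \<Longrightarrow> x k = glued (pref x k)"
    and n: "length v \<le> n"
  shows "anchor (pref x n) = anchor v"
  using n
proof (induction n rule: less_induct)
  case (less n)
  let ?l0 = "anchor v"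
  define v0 where "v0 = take ?l0 v"
  have c0: "consistent v0 v" using anchor_consistent by (simp add: v0_def)
  have l0v: "?l0 \<le> length v" by (rule anchor_le)
  have lv0: "length v0 = ?l0" using l0v by (simp add: v0_def min_def)
  have b: "winner d W v0 = winner d W v" by (rule consistent_same_winner[OF c0])
  have xlt: "k < length v \<Longrightarrow> x k = v ! k" for k
    using px[of "Suc k"] nth_take[of k "Suc k" v] by (metis lessI pref_nth Suc_leI)
  have pv: "take (length v) (pref x n) = v" using px[of "length v"] less.prems by simp
  have "consistent v0 (pref x n)"
    unfolding consistent_def
  proof (intro conjI allI impI)
    show "take (length v0) (pref x n) = v0"
      using px[OF l0v] px[of "length v"] less.prems l0v lv0 by (simp add: v0_def)
    show "length v0 \<le> length (pref x n)" using less.prems l0v lv0 by simp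
    fix k assume k: "length v0 \<le> k \<and> k < length (pref x n) \<and> d (take k (pref x n)) = winner d W v0"
    hence kn: "k < n" and dk: "d (pref x k) = winner d W v0" by auto
    show "pref x n ! k = \<sigma> v0 (drop (length v0) (take k (pref x n)))"
    proof (cases "k < length v")
      case True
      thus ?thesis using consistentD[OF c0, of k] k px[of k] xlt[of k] b kn by simp
    next
      case False
      hence "anchor (pref x k) = ?l0" using less.IH[OF kn] by simp
      moreover have "take ?l0 (pref x k) = v0"
        using px[OF l0v] l0v False by (simp add: v0_def)
      ultimately show ?thesis using xge[of k] False dk b kn lv0 by (simp add: glued_def)
    qed
  qed
  thus ?case using anchor_extend[OF pv] less.prems by (simp add: v0_def)
qed

lemma glued_wins: "(play (\<lambda>w. if d w = winner d W v then glued w else t w) v \<in> W) = winner d W v"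
proof -
  define P where "P = (\<lambda>w. if d w = winner d W v then glued w else t w)"
  define x where "x = play P v"
  define v0 where "v0 = take (anchor v) v"
  have c0: "consistent v0 v" using anchor_consistent by (simp add: v0_def)
  have l0v: "anchor v \<le> length v" by (rule anchor_le)
  have lv0: "length v0 = anchor v" using l0v by (simp add: v0_def min_def)
  have b: "winner d W v0 = winner d W v" by (rule consistent_same_winner[OF c0])
  have px: "n \<le> length v \<Longrightarrow> pref x n = take n v" for n by (simp add: x_def pref_play_hist)
  have xlt: "k < length v \<Longrightarrow> x k = v ! k" for k by (simp add: x_def play_rec[of P v k])
  have "length v \<le> k \<Longrightarrow> x k = P (pref x k)" for k by (simp add: x_def play_rec[of P v k])
  hence xge: "length v \<le> k \<Longrightarrow> d (pref x k) = winner d W v \<Longrightarrow> x k = glued (pref x k)" for k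
    by (simp add: P_def)
  have "(x \<in> W) = winner d W v0"
  proof (rule follow[where hst=v0 and \<sigma>="\<sigma> v0" and d=d])
    show "pref x (length v0) = v0" using px[OF l0v] lv0 by (simp add: v0_def)
    show "\<And>\<tau>. (play (\<lambda>w. if d (v0 @ w) = winner d W v0 then \<sigma> v0 w else \<tau> w) [] \<in> sub_win W v0)
        = winner d W v0"
      by (rule selection_wins)
    fix k assume k: "length v0 \<le> k" "d (pref x k) = winner d W v0"
    show "x k = \<sigma> v0 (drop (length v0) (pref x k))"
    proof (cases "k < length v")
      case True
      have pk: "pref x k = take k v" using px True by simp
      with k(2) have "d (take k v) = winner d W v0" by simp
      with consistentD[OF c0 k(1) True] xlt[OF True] pk show ?thesis by simp
    next
      case False
      hence le: "length v \<le> k" by simp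
      have anc: "anchor (pref x k) = anchor v"
        by (rule anchor_stable[of v x, OF px xge le])
      have "x k = glued (pref x k)" using xge[OF le] k(2) b by simp
      also have "\<dots> = \<sigma> (take (anchor v) (pref x k)) (drop (anchor v) (pref x k))"
        unfolding glued_def anc ..
      also have "\<dots> = \<sigma> v0 (drop (length v0) (pref x k))"
        using px[OF l0v] l0v le lv0 by (simp add: v0_def)
      finally show ?thesis .
    qed
  qed
  thus ?thesis using b by (simp add: x_def P_def)
qed

end

lemma uniform:
  assumes det: "\<And>v. determined (sub_turn d v) (sub_win W v)"
  shows "\<exists>S. \<forall>v t. (play (\<lambda>w. if d w = winner d W v then S w else t w) v \<in> W) = winner d W v"
proof -
  have "\<forall>v. \<exists>\<sigma>. \<forall>\<tau>. (play (\<lambda>w. if d (v @ w) = winner d W v then \<sigma> w else \<tau> w) [] \<in> sub_win W v)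
      = winner d W v"
  proof
    fix v
    show "\<exists>\<sigma>. \<forall>\<tau>. (play (\<lambda>w. if d (v @ w) = winner d W v then \<sigma> w else \<tau> w) [] \<in> sub_win W v)
      = winner d W v"
    proof (cases "winner d W v")
      case True
      then have "wins True (sub_turn d v) (sub_win W v)" by (simp add: winner_def wins_True)
      thus ?thesis using True unfolding wins_def sub_turn_def by simp
    next
      case False
      then have "wins False (sub_turn d v) (sub_win W v)"
        using det[of v] by (simp add: winner_def determined_def wins_False)
      thus ?thesis using False unfolding wins_def sub_turn_def by simp
    qed
  qed
  then have "\<exists>\<sigma>. \<forall>v \<tau>. (play (\<lambda>w. if d (v @ w) = winner d W v then \<sigma> v w else \<tau> w) []
      \<in> sub_win W v) = winner d W v"
    by (rule choice)
  then obtain \<sigma> where "\<forall>v \<tau>. (play (\<lambda>w. if d (v @ w) = winner d W v then \<sigma> v w else \<tau> w) []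
      \<in> sub_win W v) = winner d W v"
    by (rule exE)
  then interpret winning_selection d W \<sigma> by unfold_locales blast
  show ?thesis using glued_wins by blast
qed

section \<open>The reduction game\<close>

type_synonym winlose = "(bool list \<Rightarrow> bool) \<times> cantor set"

text \<open>Histories have the shapes
  0^k (player 0 to move), entry n = 0^n 1 (player 0 decides whether to enter game n),
  0^n 1 0 v (game over, outcome 1) and inside n @ v = 0^n 1 1 v (game n after history v, the
  mover being given by the turn function of game n).  Outcomes: 2 for 0^omega or a won game,
  0 for a lost game, 1 after declining.\<close>

definition red_turn :: "(nat \<Rightarrow> winlose) \<Rightarrow> bool list \<Rightarrow> nat" where
  "red_turn xs w = (let n = length (takeWhile Not w) in
     if Suc n < length w \<and> w ! Suc n then (if fst (xs n) (drop (Suc (Suc n)) w) then 0 else 1) else 0)"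

definition red_value :: "(nat \<Rightarrow> winlose) \<Rightarrow> cantor \<Rightarrow> nat" where
  "red_value xs x = (if \<forall>k. \<not> x k then 2 else let n = (LEAST k. x k) in
     if x (Suc n) then (if (\<lambda>k. x (k + Suc (Suc n))) \<in> snd (xs n) then 2 else 0) else 1)"

definition red_pref :: "nat \<Rightarrow> nat \<Rightarrow> nat \<Rightarrow> bool" where
  "red_pref a x y \<longleftrightarrow> (a = 0 \<and> x < y \<and> y < 3) \<or> (a = 1 \<and> y < x \<and> x < 3)"

definition reduction_game :: "(nat \<Rightarrow> winlose) \<Rightarrow> game" where
  "reduction_game xs = \<lparr>players = 2, outcomes = 3, turn = red_turn xs, gpref = red_pref, gval = red_value xs\<rparr>"

abbreviation entry :: "nat \<Rightarrow> bool list" where "entry i \<equiv> replicate i False @ [True]"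
abbreviation inside :: "nat \<Rightarrow> bool list" where "inside i \<equiv> replicate i False @ [True, True]"

lemma takeWhile_entry: "length (takeWhile Not (replicate i False @ True # r)) = i"
  by (induction i) auto

lemma red_turn_entry: "red_turn xs (entry i) = 0"
  by (simp add: red_turn_def takeWhile_entry)

lemma red_turn_inside: "red_turn xs (inside i @ v) = (if fst (xs i) v then 0 else 1)"
proof -
  have "inside i @ v = replicate i False @ True # True # v" by simp
  thus ?thesis by (simp add: red_turn_def takeWhile_entry nth_append)
qed

lemma red_turn_zeros: "red_turn xs (replicate k False) = 0"
  by (simp add: red_turn_def)

lemma red_value_lt3: "red_value xs x < 3"
  by (simp add: red_value_def Let_def)

lemma red_value_zeros: "red_value xs zeros = 2"
  by (simp add: red_value_def zeros_def)

lemma red_value_pre: "red_value xs (prepend (replicate i False @ [True, b]) y) = (if b then (if y \<in> snd (xs i) then 2 else 0) else 1)"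
proof -
  let ?x = "prepend (replicate i False @ [True, b]) y"
  have xi: "?x i" by (simp add: prepend_def nth_append)
  have xk: "k < i \<Longrightarrow> \<not> ?x k" for k by (simp add: prepend_def nth_append)
  have L: "(LEAST k. ?x k) = i"
  proof (rule Least_equality)
    show "?x i" by (rule xi)
    fix k assume "?x k" thus "i \<le> k" using xk not_less by blast
  qed
  have xs: "?x (Suc i) = b" by (simp add: prepend_def nth_append)
  have tl: "(\<lambda>k. ?x (k + Suc (Suc i))) = y" by (rule ext) (simp add: prepend_def)
  show ?thesis using xi L xs tl by (auto simp: red_value_def Let_def)
qed

lemma wf_reduction_game: "wf_game (reduction_game xs)"
proof -
  have w: "wfP (\<lambda>y x. red_pref a x y)" for a
    by (rule wfp_if_convertible_to_nat[where f="\<lambda>y. if a = 0 then 3 - y else y"]) (auto simp: red_pref_def)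
  have t: "red_turn xs w < 2" for w by (simp add: red_turn_def Let_def)
  show ?thesis unfolding wf_game_def reduction_game_def using w t red_value_lt3 by (auto simp: red_pref_def)
qed

lemma antagonistic_reduction_game: "antagonistic_linear (reduction_game xs)"
  by (auto simp: antagonistic_linear_def reduction_game_def red_pref_def)

lemma value_at_entry: "red_value xs (play t (entry i)) = (if t (entry i) then (if play (\<lambda>w. t (inside i @ w)) [] \<in> snd (xs i) then 2 else 0) else 1)"
proof -
  have "play t (entry i) = play t (entry i @ [t (entry i)])" by (rule play_step)
  also have "\<dots> = prepend (replicate i False @ [True, t (entry i)]) (play (\<lambda>w. t (replicate i False @ [True, t (entry i)] @ w)) [])"
    using play_nil_hist[of t "replicate i False @ [True, t (entry i)]"] by simp
  finally show ?thesis by (cases "t (entry i)") (simp_all add: red_value_pre)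
qed

lemma history_cases:
  "(\<exists>k. w = replicate k False) \<or> (\<exists>i. w = entry i) \<or> (\<exists>i v. w = entry i @ False # v) \<or> (\<exists>i v. w = inside i @ v)"
proof -
  define t where "t = takeWhile Not w"
  define r where "r = dropWhile Not w"
  define n where "n = length t"
  have "replicate (length t) False = t"
    unfolding t_def by (rule replicate_length_same) (auto dest: set_takeWhileD)
  hence w2: "w = replicate n False @ r" unfolding n_def t_def r_def by (metis takeWhile_dropWhile_id)
  show ?thesis
  proof (cases r)
    case Nil thus ?thesis using w2 by blast
  next
    case (Cons a r')
    have "\<not> Not (hd r)" unfolding r_def by (rule hd_dropWhile) (simp add: Cons[unfolded r_def])
    hence a: "a" using Cons by simp
    show ?thesis
    proof (cases r')
      case Nil
      hence "w = entry n" using w2 Cons a by simp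
      thus ?thesis by blast
    next
      case (Cons b v)
      show ?thesis
      proof (cases b)
        case True
        with w2 \<open>r = a # r'\<close> a Cons have "w = inside n @ v" by simp
        thus ?thesis by blast
      next
        case False
        with w2 \<open>r = a # r'\<close> a Cons have "w = entry n @ False # v" by simp
        thus ?thesis by blast
      qed
    qed
  qed
qed

lemma value_inside: "red_value xs (play t (inside i @ v)) = (if play (\<lambda>z. t (inside i @ z)) v \<in> snd (xs i) then 2 else 0)"
  using play_append[of t "inside i" v] red_value_pre[of xs i True] by simp

lemma value_after_skip: "red_value xs (play t (entry i @ False # v)) = 1"
  using play_append[of t "replicate i False @ [True, False]" v] red_value_pre[of xs i False] by simp

lemma play_zeros: "(\<And>n. t (replicate n False) = False) \<Longrightarrow> play t (replicate k False) = zeros"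
  by (rule play_unique) (auto simp: zeros_def pref_def map_replicate_const)

subsection \<open>Subgame perfect equilibria reveal the winners\<close>

definition deviate_in :: "(nat \<Rightarrow> winlose) \<Rightarrow> nat \<Rightarrow> bool \<Rightarrow> (bool list \<Rightarrow> bool) \<Rightarrow> (bool list \<Rightarrow> bool)
    \<Rightarrow> bool list \<Rightarrow> bool" where
  "deviate_in xs i b \<sigma> s w = (if take (length (inside i)) w = inside i \<and> length (inside i) \<le> length w
     \<and> fst (xs i) (drop (length (inside i)) w) = b then \<sigma> (drop (length (inside i)) w) else s w)"

lemma deviate_in_agrees:
  assumes "red_turn xs w \<noteq> (if b then 0 else 1)"
  shows "deviate_in xs i b \<sigma> s w = s w"
proof (cases "take (length (inside i)) w = inside i \<and> length (inside i) \<le> length w")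
  case True
  hence "w = inside i @ drop (length (inside i)) w" by (metis append_take_drop_id)
  hence "red_turn xs w = (if fst (xs i) (drop (length (inside i)) w) then 0 else 1)"
    by (metis red_turn_inside)
  thus ?thesis using assms by (auto simp: deviate_in_def)
qed (auto simp: deviate_in_def)

lemma deviate_in_inside:
  "(\<lambda>v. deviate_in xs i b \<sigma> s (inside i @ v)) = (\<lambda>v. if fst (xs i) v = b then \<sigma> v else s (inside i @ v))"
  by (rule ext) (simp add: deviate_in_def)

lemma deviate_in_entry: "deviate_in xs i b \<sigma> s (entry i) = s (entry i)"
  by (simp add: deviate_in_def)

lemma spe_no_deviation:
  assumes "subgame_perfect (reduction_game xs) s" "a < 2" "\<And>w. red_turn xs w \<noteq> a \<Longrightarrow> s' w = s w"
  shows "\<not> red_pref a (red_value xs (play s h)) (red_value xs (play s' h))"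
  using assms unfolding subgame_perfect_def nash_at_def by (auto simp: reduction_game_def)

text \<open>If the equilibrium enters the n-th game, then player 1 wins it: otherwise player 2 could
  deviate inside it to outcome 0, so the equilibrium outcome would be 0, which player 1 could
  improve to 1 by not entering.\<close>
lemma spe_enters_only_winnable:
  assumes spe: "subgame_perfect (reduction_game xs) s"
    and det: "determined (fst (xs i)) (snd (xs i))" and enter: "s (entry i)"
  shows "p1_wins (fst (xs i)) (snd (xs i))"
proof (rule ccontr)
  assume "\<not> p1_wins (fst (xs i)) (snd (xs i))"
  hence "p2_wins (fst (xs i)) (snd (xs i))" using det by (simp add: determined_def)
  then obtain \<tau> where \<tau>: "\<And>\<sigma>. play (\<lambda>w. if fst (xs i) w then \<sigma> w else \<tau> w) [] \<notin> snd (xs i)"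
    unfolding p2_wins_def by blast
  let ?s1 = "deviate_in xs i False \<tau> s"
  have inside: "(\<lambda>v. ?s1 (inside i @ v)) = (\<lambda>v. if fst (xs i) v then s (inside i @ v) else \<tau> v)"
    using deviate_in_inside[of xs i False \<tau> s] by (auto intro!: ext)
  have "red_value xs (play ?s1 (entry i)) = 0"
    using value_at_entry[of xs ?s1 i] enter deviate_in_entry[of xs i False \<tau> s] inside \<tau>[of "\<lambda>v. s (inside i @ v)"]
    by simp
  moreover have "red_turn xs w \<noteq> 1 \<Longrightarrow> ?s1 w = s w" for w by (rule deviate_in_agrees) simp
  ultimately have "\<not> red_pref 1 (red_value xs (play s (entry i))) 0"
    using spe_no_deviation[OF spe, of 1 ?s1 "entry i"] by simp
  hence v0: "red_value xs (play s (entry i)) = 0" using red_value_lt3[of xs] by (auto simp: red_pref_def)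
  let ?s2 = "s(entry i := False)"
  have "red_value xs (play ?s2 (entry i)) = 1" using value_at_entry[of xs ?s2 i] by simp
  moreover have "red_turn xs w \<noteq> 0 \<Longrightarrow> ?s2 w = s w" for w using red_turn_entry[of xs i] by auto
  ultimately show False using spe_no_deviation[OF spe, of 0 ?s2 "entry i"] v0 by (simp add: red_pref_def)
qed

text \<open>If the equilibrium does not enter the n-th game, then player 2 wins it: otherwise
  player 1 could enter and play a winning strategy, improving outcome 1 to 2.\<close>
lemma spe_skips_only_lost:
  assumes spe: "subgame_perfect (reduction_game xs) s"
    and det: "determined (fst (xs i)) (snd (xs i))" and skip: "\<not> s (entry i)"
  shows "p2_wins (fst (xs i)) (snd (xs i))"
proof (rule ccontr)
  assume "\<not> p2_wins (fst (xs i)) (snd (xs i))"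
  hence "p1_wins (fst (xs i)) (snd (xs i))" using det by (simp add: determined_def)
  then obtain \<sigma> where \<sigma>: "\<And>\<tau>. play (\<lambda>w. if fst (xs i) w then \<sigma> w else \<tau> w) [] \<in> snd (xs i)"
    unfolding p1_wins_def by blast
  let ?s3 = "(deviate_in xs i True \<sigma> s)(entry i := True)"
  have inside: "(\<lambda>v. ?s3 (inside i @ v)) = (\<lambda>v. if fst (xs i) v then \<sigma> v else s (inside i @ v))"
    using deviate_in_inside[of xs i True \<sigma> s] by (auto intro!: ext)
  have "red_value xs (play ?s3 (entry i)) = 2"
    using value_at_entry[of xs ?s3 i] inside \<sigma>[of "\<lambda>v. s (inside i @ v)"] by simp
  moreover have "red_value xs (play s (entry i)) = 1" using value_at_entry[of xs s i] skip by simp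
  moreover have "red_turn xs w \<noteq> 0 \<Longrightarrow> ?s3 w = s w" for w
    using red_turn_entry[of xs i] deviate_in_agrees[of xs w True i \<sigma> s] by auto
  ultimately show False using spe_no_deviation[OF spe, of 0 ?s3 "entry i"] by (simp add: red_pref_def)
qed

lemma winners_from_spe:
  assumes spe: "subgame_perfect (reduction_game xs) s"
    and det: "\<And>i v. determined (sub_turn (fst (xs i)) v) (sub_win (snd (xs i)) v)"
  shows "(\<lambda>i. if s (entry i) then 1 else 2) \<in> hat Win xs"
proof -
  have "determined (fst (xs i)) (snd (xs i))" for i
    using det[of i "[]"] by (simp add: sub_turn_def sub_win_def prepend_def)
  thus ?thesis using spe_enters_only_winnable[OF spe] spe_skips_only_lost[OF spe]
    by (simp add: hat_def Win_def)
qed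

subsection \<open>Existence of subgame perfect equilibria\<close>

text \<open>Given profiles S i that win every subgame of the i-th game for its winner, the
  reduction game has the following subgame perfect equilibrium: player 1 never leaves 0^omega
  on his own, enters the i-th game exactly if he wins it, and inside the i-th game both players
  follow S i.\<close>
locale equilibrium_construction =
  fixes xs :: "nat \<Rightarrow> winlose" and S :: "nat \<Rightarrow> bool list \<Rightarrow> bool"
  assumes S_wins: "\<And>i v t. (play (\<lambda>w. if fst (xs i) w = winner (fst (xs i)) (snd (xs i)) v then S i w else t w) v
      \<in> snd (xs i)) = winner (fst (xs i)) (snd (xs i)) v"
begin

abbreviation wins_at :: "nat \<Rightarrow> bool list \<Rightarrow> bool" where
  "wins_at i v \<equiv> winner (fst (xs i)) (snd (xs i)) v"

definition profile :: "bool list \<Rightarrow> bool" where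
  "profile w = (let n = length (takeWhile Not w) in if n < length w then
      (if Suc n = length w then wins_at n [] else if w ! Suc n then S n (drop (Suc (Suc n)) w) else False)
    else False)"

lemma profile_zeros: "profile (replicate k False) = False"
  by (simp add: profile_def)

lemma profile_entry: "profile (entry i) = wins_at i []"
  by (simp add: profile_def takeWhile_entry)

lemma profile_inside: "(\<lambda>v. profile (inside i @ v)) = S i"
proof
  fix v
  have "inside i @ v = replicate i False @ True # True # v" by simp
  thus "profile (inside i @ v) = S i v" by (simp add: profile_def takeWhile_entry nth_append)
qed

lemma winner_keeps_winning:
  assumes agree: "\<And>z. red_turn xs z \<noteq> a \<Longrightarrow> s' z = profile z"
    and loser: "a = (if wins_at i v then 1 else 0)"
  shows "(play (\<lambda>z. s' (inside i @ z)) v \<in> snd (xs i)) = wins_at i v"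
proof -
  have "(\<lambda>w. if fst (xs i) w = wins_at i v then S i w else s' (inside i @ w)) = (\<lambda>z. s' (inside i @ z))"
  proof
    fix z
    show "(if fst (xs i) z = wins_at i v then S i z else s' (inside i @ z)) = s' (inside i @ z)"
      using agree[of "inside i @ z"] red_turn_inside[of xs i z] profile_inside loser by (auto dest: fun_cong)
  qed
  with S_wins[of i v "\<lambda>z. s' (inside i @ z)"] show ?thesis by simp
qed

lemma nash_inside:
  assumes "a < 2" "\<And>z. red_turn xs z \<noteq> a \<Longrightarrow> s' z = profile z"
  shows "\<not> red_pref a (red_value xs (play profile (inside i @ v))) (red_value xs (play s' (inside i @ v)))"
proof -
  have cur: "red_value xs (play profile (inside i @ v)) = (if wins_at i v then 2 else 0)"
    using value_inside[of xs profile i v] profile_inside[of i] S_wins[of i v "S i"] by simp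
  have dev: "red_value xs (play s' (inside i @ v)) = (if play (\<lambda>z. s' (inside i @ z)) v \<in> snd (xs i) then 2 else 0)"
    by (rule value_inside)
  show ?thesis
  proof (cases "a = (if wins_at i v then 1 else 0)")
    case True thus ?thesis using winner_keeps_winning[OF assms(2) True] cur dev by (simp add: red_pref_def)
  next
    case False thus ?thesis using assms(1) cur dev by (auto simp: red_pref_def split: if_splits)
  qed
qed

lemma nash_entry:
  assumes "a < 2" and agree: "\<And>z. red_turn xs z \<noteq> a \<Longrightarrow> s' z = profile z"
  shows "\<not> red_pref a (red_value xs (play profile (entry i))) (red_value xs (play s' (entry i)))"
proof -
  have cur: "red_value xs (play profile (entry i)) = (if wins_at i [] then 2 else 1)"
    using value_at_entry[of xs profile i] profile_entry[of i] profile_inside[of i] S_wins[of i "[]" "S i"] by simp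
  have dev: "red_value xs (play s' (entry i)) = (if s' (entry i) then
      (if play (\<lambda>z. s' (inside i @ z)) [] \<in> snd (xs i) then 2 else 0) else 1)"
    by (rule value_at_entry)
  have kept: "a = 1 \<Longrightarrow> s' (entry i) = wins_at i []"
    using agree[of "entry i"] red_turn_entry[of xs i] profile_entry[of i] by simp
  have keeps: "a = (if wins_at i [] then 1 else 0) \<Longrightarrow>
      (play (\<lambda>z. s' (inside i @ z)) [] \<in> snd (xs i)) = wins_at i []"
    by (rule winner_keeps_winning[OF agree])
  consider "a = 0" | "a = 1" using assms(1) by linarith
  thus ?thesis
  proof cases
    case 1
    thus ?thesis using cur dev keeps by (cases "wins_at i []") (simp_all add: red_pref_def)
  next
    case 2
    thus ?thesis using cur dev keeps kept by (cases "wins_at i []") (simp_all add: red_pref_def)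
  qed
qed

lemma nash_zeros:
  assumes "a < 2" and agree: "\<And>z. red_turn xs z \<noteq> a \<Longrightarrow> s' z = profile z"
  shows "\<not> red_pref a (red_value xs (play profile (replicate k False))) (red_value xs (play s' (replicate k False)))"
proof -
  have cur: "play profile (replicate k False) = zeros" by (rule play_zeros) (rule profile_zeros)
  show ?thesis
  proof (cases "a = 0")
    case True thus ?thesis using cur red_value_zeros[of xs] by (simp add: red_pref_def)
  next
    case False
    have "s' (replicate n False) = False" for n
      using agree[of "replicate n False"] red_turn_zeros[of xs n] False profile_zeros by simp
    hence "play s' (replicate k False) = zeros" by (rule play_zeros)
    thus ?thesis using cur by (simp add: red_pref_def)
  qed
qed

theorem profile_spe: "subgame_perfect (reduction_game xs) profile"
  unfolding subgame_perfect_def nash_at_def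
proof (intro allI impI)
  fix w a s'
  assume "a < players (reduction_game xs)" and "\<forall>w. turn (reduction_game xs) w \<noteq> a \<longrightarrow> s' w = profile w"
  hence a: "a < 2" and agree: "\<And>z. red_turn xs z \<noteq> a \<Longrightarrow> s' z = profile z"
    by (simp_all add: reduction_game_def)
  show "\<not> gpref (reduction_game xs) a (gval (reduction_game xs) (play profile w)) (gval (reduction_game xs) (play s' w))"
    using history_cases[of w] nash_zeros[OF a agree] nash_entry[OF a agree] nash_inside[OF a agree]
      value_after_skip[of xs profile] value_after_skip[of xs s'] by (auto simp: reduction_game_def red_pref_def)
qed

end

lemma reduction_game_has_spe:
  assumes det: "\<And>i v. determined (sub_turn (fst (xs i)) v) (sub_win (snd (xs i)) v)"
  shows "\<exists>s. subgame_perfect (reduction_game xs) s"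
proof -
  have "\<forall>i. \<exists>S. \<forall>v t. (play (\<lambda>w. if fst (xs i) w = winner (fst (xs i)) (snd (xs i)) v then S w else t w) v
      \<in> snd (xs i)) = winner (fst (xs i)) (snd (xs i)) v"
    using uniform[OF det] by blast
  hence "\<exists>S. \<forall>i v t. (play (\<lambda>w. if fst (xs i) w = winner (fst (xs i)) (snd (xs i)) v then S i w else t w) v
      \<in> snd (xs i)) = winner (fst (xs i)) (snd (xs i)) v"
    by (rule choice)
  then obtain S where "\<forall>i v t. (play (\<lambda>w. if fst (xs i) w = winner (fst (xs i)) (snd (xs i)) v then S i w else t w) v
      \<in> snd (xs i)) = winner (fst (xs i)) (snd (xs i)) v"
    by (rule exE)
  then interpret equilibrium_construction xs S by unfold_locales blast
  show ?thesis using profile_spe by blast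
qed

lemma prepend_prepend: "prepend a (prepend b y) = prepend (a @ b) y"
  by (rule ext) (auto simp: prepend_def nth_append)

lemma prepend_entry_nth:
  "prepend (entry n) y k = (if k < n then False else if k = n then True else y (k - Suc n))"
  by (simp add: prepend_def nth_append)

lemma prepend_entry_eq: "prepend (entry n) y = prepend (entry m) z \<longleftrightarrow> n = m \<and> y = z"
proof
  assume eq: "prepend (entry n) y = prepend (entry m) z"
  have "n = m" using fun_cong[OF eq, of n] fun_cong[OF eq, of m]
    by (auto simp: prepend_entry_nth split: if_splits)
  moreover have "y k = z k" for k
    using fun_cong[OF eq, of "k + Suc n"] \<open>n = m\<close> by (simp add: prepend_entry_nth)
  ultimately show "n = m \<and> y = z" by auto
qed simp

lemma prepend_single_eq: "prepend [b] y = prepend [c] z \<longleftrightarrow> b = c \<and> y = z"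
proof
  assume eq: "prepend [b] y = prepend [c] z"
  have "y k = z k" for k using fun_cong[OF eq, of "Suc k"] by (simp add: prepend_def)
  with fun_cong[OF eq, of 0] show "b = c \<and> y = z" by (auto simp: prepend_def)
qed simp

lemma omega_op_zeros: "zeros \<in> omega_op As"
  by (simp add: omega_op_def)

lemma omega_op_entry: "prepend (entry n) y \<in> omega_op As \<longleftrightarrow> y \<in> As n"
proof -
  have "prepend (entry n) y \<noteq> zeros"
  proof
    assume "prepend (entry n) y = zeros"
    from fun_cong[OF this, of n] show False by (simp add: prepend_entry_nth zeros_def)
  qed
  thus ?thesis by (auto simp: omega_op_def prepend_entry_eq)
qed

lemma cantor_cases:
  obtains "x = zeros" | n b y where "x = prepend (entry n @ [b]) y"
proof (cases "\<forall>k. \<not> x k")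
  case True thus ?thesis using that(1) by (auto simp: zeros_def)
next
  case False
  define n where "n = (LEAST k. x k)"
  have xn: "x n" unfolding n_def using False by (metis LeastI)
  have lt: "k < n \<Longrightarrow> \<not> x k" for k unfolding n_def by (rule not_less_Least)
  have "x = prepend (entry n @ [x (Suc n)]) (\<lambda>k. x (k + Suc (Suc n)))"
  proof
    fix m
    show "x m = prepend (entry n @ [x (Suc n)]) (\<lambda>k. x (k + Suc (Suc n))) m"
    proof (cases "m < Suc (Suc n)")
      case True
      thus ?thesis using xn lt[of m] by (cases "m < n"; cases "m = n") (auto simp: prepend_def nth_append less_Suc_eq)
    next
      case False
      hence "prepend (entry n @ [x (Suc n)]) (\<lambda>k. x (k + Suc (Suc n))) m = x (m - Suc (Suc n) + Suc (Suc n))"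
        by (simp add: prepend_def)
      also have "m - Suc (Suc n) + Suc (Suc n) = m" using False by simp
      finally show ?thesis by simp
    qed
  qed
  thus ?thesis by (rule that(2))
qed

text \<open>The preimages of the upper sets {2} and {1, 2} under the valuation are obtained from the
  winning sets by the omega operation; this is where the hypotheses on \<Gamma>1 enter.\<close>
definition win_region :: "(nat \<Rightarrow> winlose) \<Rightarrow> cantor set" where
  "win_region xs = omega_op (\<lambda>n. prepend [True] ` snd (xs n))"

definition nonlosing_region :: "(nat \<Rightarrow> winlose) \<Rightarrow> cantor set" where
  "nonlosing_region xs = omega_op (\<lambda>n. prepend [True] ` snd (xs n) \<union> prepend [False] ` UNIV)"

lemma red_value_regions:
  "red_value xs -` {2} = win_region xs" "red_value xs -` {1, 2} = nonlosing_region xs"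
proof (rule_tac [!] set_eqI)
  fix x
  have "(x \<in> red_value xs -` {2} \<longleftrightarrow> x \<in> win_region xs) \<and>
        (x \<in> red_value xs -` {1, 2} \<longleftrightarrow> x \<in> nonlosing_region xs)"
  proof (cases rule: cantor_cases[of x])
    case 1 thus ?thesis by (simp add: win_region_def nonlosing_region_def red_value_zeros omega_op_zeros)
  next
    case (2 n b y)
    have val: "red_value xs x = (if b then (if y \<in> snd (xs n) then 2 else 0) else 1)"
      using red_value_pre[of xs n b y] 2 by simp
    have "x = prepend (entry n) (prepend [b] y)" using 2 by (simp add: prepend_prepend)
    hence mem: "x \<in> omega_op As \<longleftrightarrow> prepend [b] y \<in> As n" for As by (simp add: omega_op_entry)
    show ?thesis using val mem by (auto simp: win_region_def nonlosing_region_def prepend_single_eq)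
  qed
  thus "x \<in> red_value xs -` {2} \<longleftrightarrow> x \<in> win_region xs"
    "x \<in> red_value xs -` {1, 2} \<longleftrightarrow> x \<in> nonlosing_region xs" by blast+
qed

lemma upper_cases:
  assumes "a < 2" "upper_set (reduction_game xs) a U"
  shows "(a = 0 \<and> (U = {} \<or> U = {2} \<or> U = {1,2} \<or> U = {0,1,2})) \<or>
         (a = 1 \<and> (U = {} \<or> U = {0} \<or> U = {0,1} \<or> U = {0,1,2}))"
proof -
  define b0 b1 b2 where "b0 \<longleftrightarrow> 0 \<in> U" and "b1 \<longleftrightarrow> 1 \<in> U" and "b2 \<longleftrightarrow> 2 \<in> U"
  have "x \<in> U \<Longrightarrow> x = 0 \<or> x = 1 \<or> x = 2" for x
    using assms(2) by (auto simp: upper_set_def reduction_game_def)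
  hence U: "U = (if b0 then {0} else {}) \<union> (if b1 then {1} else {}) \<union> (if b2 then {2} else {})"
    unfolding b0_def b1_def b2_def by auto
  have up: "x \<in> U \<Longrightarrow> red_pref a x y \<Longrightarrow> y \<in> U" for x y
    using assms(2) by (auto simp: upper_set_def reduction_game_def)
  consider "a = 0" | "a = 1" using assms(1) by linarith
  thus ?thesis
  proof cases
    case 1
    with up have "b0 \<Longrightarrow> b1" "b1 \<Longrightarrow> b2" unfolding b0_def b1_def b2_def by (auto simp: red_pref_def)
    with 1 show ?thesis unfolding U by (cases b0; cases b1; cases b2) (simp_all add: insert_commute)
  next
    case 2
    with up have "b2 \<Longrightarrow> b1" "b1 \<Longrightarrow> b0" unfolding b0_def b1_def b2_def by (auto simp: red_pref_def)
    with 2 show ?thesis unfolding U by (cases b0; cases b1; cases b2) (simp_all add: insert_commute)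
  qed
qed

section \<open>Computing a name of the reduction game\<close>

text \<open>Decoding of a word code: if the word has the form 0^n 1 1 v, then in_subgame_code holds and
  turn_query is the position in the input name where the turn table of game n stores v.\<close>
definition turn_query :: "nat \<Rightarrow> nat" where
  "turn_query c = npair (leading_zeros c) (npair 0 (cdrop c (Suc (Suc (leading_zeros c)))))"

definition in_subgame_code :: "nat \<Rightarrow> bool" where
  "in_subgame_code c \<longleftrightarrow> Suc (leading_zeros c) < clen c \<and> cnth c (Suc (leading_zeros c)) = 1"

lemma red_turn_code:
  "red_turn xs w = (if in_subgame_code (wcode w)
     then (if fst (xs (leading_zeros (wcode w))) (drop (Suc (Suc (leading_zeros (wcode w)))) w) then 0 else 1)
     else 0)"
  by (simp add: red_turn_def in_subgame_code_def leading_zeros_wcode Let_def)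

text \<open>The name of the reduction game is computed digit by digit from the bundle
  pairB p (pairB nw (pairB nm ne)), where p names the input sequence and nw, nm, ne are
  \<Gamma>1-names of win_region, nonlosing_region and the empty set.  Digit k of the name is
  name_digit applied to k and the single bundle digit at position name_index k.  The components
  of a game name are: 0 players, 1 outcomes, 2 turn table, 3 preference table, 4 names of the
  preimages of upper sets.  An upper set U of player a is addressed by npair a (set_encode U);
  its name is a complement bit followed by a \<Gamma>1-name of nw, nm or ne.\<close>
definition name_index :: "nat \<Rightarrow> nat" where
  "name_index k = (if nfst k = 2 then 2 * turn_query (nsnd k) else if nfst k = 4 then
     (if nsnd (nsnd k) = 0 then 0 else
      if nfst (nsnd k) = npair 0 4 \<or> nfst (nsnd k) = npair 1 3 then 4 * (nsnd (nsnd k) - 1) + 1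
      else if nfst (nsnd k) = npair 0 6 \<or> nfst (nsnd k) = npair 1 1 then 8 * (nsnd (nsnd k) - 1) + 3
      else 8 * (nsnd (nsnd k) - 1) + 7) else 0)"

definition name_digit :: "nat \<Rightarrow> nat" where
  "name_digit z = (if nfst (nfst z) = 0 then 2 else if nfst (nfst z) = 1 then 3
    else if nfst (nfst z) = 2 then (if in_subgame_code (nsnd (nfst z)) then (if nsnd z = 1 then 0 else 1) else 0)
    else if nfst (nfst z) = 3 then (if red_pref (nfst (nsnd (nfst z))) (nfst (nsnd (nsnd (nfst z)))) (nsnd (nsnd (nsnd (nfst z)))) then 1 else 0)
    else if nfst (nfst z) = 4 then
      (if nfst (nsnd (nfst z)) = npair 0 4 \<or> nfst (nsnd (nfst z)) = npair 1 3 \<or> nfst (nsnd (nfst z)) = npair 0 6 \<or> nfst (nsnd (nfst z)) = npair 1 1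
          \<or> nfst (nsnd (nfst z)) = npair 0 0 \<or> nfst (nsnd (nfst z)) = npair 1 0 \<or> nfst (nsnd (nfst z)) = npair 0 7 \<or> nfst (nsnd (nfst z)) = npair 1 7
       then (if nsnd (nsnd (nfst z)) = 0 then
               (if nfst (nsnd (nfst z)) = npair 1 3 \<or> nfst (nsnd (nfst z)) = npair 1 1 \<or> nfst (nsnd (nfst z)) = npair 0 7 \<or> nfst (nsnd (nfst z)) = npair 1 7 then 1 else 0)
             else nsnd z)
       else 0)
    else 0)"

lemma rec_name_index: "total_rec name_index"
  unfolding name_index_def turn_query_def by (intro rec_intros)+

lemma rec_name_digit: "total_rec name_digit"
  unfolding name_digit_def in_subgame_code_def red_pref_def by (intro rec_intros)+

lemma pairB_even: "pairB p R (2 * t) = p t" by (simp add: pairB_def)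
lemma pairB_odd: "pairB p R (2 * t + 1) = R t" by (simp add: pairB_def)

lemma pairB_4_1: "pairB p (pairB a b) (4 * m + 1) = a m"
proof -
  have "\<not> even (4 * m + 1)" "(4 * m + 1) div 2 = 2 * m" by simp_all
  thus ?thesis by (simp add: pairB_def)
qed

lemma pairB_8_3: "pairB p (pairB a (pairB c e)) (8 * m + 3) = c m"
proof -
  have "\<not> even (8 * m + 3)" "(8 * m + 3) div 2 = 4 * m + 1" by simp_all
  moreover have "\<not> even (4 * m + 1)" "(4 * m + 1) div 2 = 2 * m" by simp_all
  ultimately show ?thesis by (simp add: pairB_def)
qed

lemma pairB_8_7: "pairB p (pairB a (pairB c e)) (8 * m + 7) = e m"
proof -
  have "\<not> even (8 * m + 7)" "(8 * m + 7) div 2 = 4 * m + 3" by simp_all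
  moreover have "\<not> even (4 * m + 3)" "(4 * m + 3) div 2 = 2 * m + 1" by simp_all
  moreover have "\<not> even (2 * m + 1)" "(2 * m + 1) div 2 = m" by simp_all
  ultimately show ?thesis by (simp add: pairB_def)
qed

definition bundle_name :: "baire \<Rightarrow> baire \<Rightarrow> baire \<Rightarrow> baire \<Rightarrow> baire" where
  "bundle_name p nw nm ne = (\<lambda>k. name_digit (npair k (pairB p (pairB nw (pairB nm ne)) (name_index k))))"

text \<open>The name of the preimage of an upper set addressed by j: a complement bit followed by nw,
  nm or ne.  Only the eight codes j of upper sets matter (see upper_cases).\<close>
lemma bundle_name_upper_digits:
  fixes j :: nat and p nw nm ne :: baire
  defines "e \<equiv> compB j (compB 4 (bundle_name p nw nm ne))"
  shows "j = npair 0 4 \<or> j = npair 1 3 \<Longrightarrow> (\<lambda>m. e (Suc m)) = nw"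
    and "j = npair 0 6 \<or> j = npair 1 1 \<Longrightarrow> (\<lambda>m. e (Suc m)) = nm"
    and "j = npair 0 0 \<or> j = npair 1 0 \<or> j = npair 0 7 \<or> j = npair 1 7 \<Longrightarrow> (\<lambda>m. e (Suc m)) = ne"
    and "j = npair 1 3 \<or> j = npair 1 1 \<or> j = npair 0 7 \<or> j = npair 1 7 \<Longrightarrow> e 0 = 1"
    and "j = npair 0 4 \<or> j = npair 0 6 \<or> j = npair 0 0 \<or> j = npair 1 0 \<Longrightarrow> e 0 = 0"
proof -
  let ?z = "pairB p (pairB nw (pairB nm ne))"
  have eS: "e (Suc m) = name_digit (npair (npair 4 (npair j (Suc m))) (?z (name_index (npair 4 (npair j (Suc m))))))" for m
    by (simp add: e_def compB_def bundle_name_def)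
  show "j = npair 0 4 \<or> j = npair 1 3 \<Longrightarrow> (\<lambda>m. e (Suc m)) = nw"
    by (auto intro!: ext simp: eS name_index_def name_digit_def pairB_4_1[simplified])
  show "j = npair 0 6 \<or> j = npair 1 1 \<Longrightarrow> (\<lambda>m. e (Suc m)) = nm"
    by (auto intro!: ext simp: eS name_index_def name_digit_def pairB_8_3[simplified])
  show "j = npair 0 0 \<or> j = npair 1 0 \<or> j = npair 0 7 \<or> j = npair 1 7 \<Longrightarrow> (\<lambda>m. e (Suc m)) = ne"
    by (auto intro!: ext simp: eS name_index_def name_digit_def pairB_8_7[simplified])
  show "j = npair 1 3 \<or> j = npair 1 1 \<or> j = npair 0 7 \<or> j = npair 1 7 \<Longrightarrow> e 0 = 1"
    by (auto simp: e_def compB_def bundle_name_def name_digit_def)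
  show "j = npair 0 4 \<or> j = npair 0 6 \<or> j = npair 0 0 \<or> j = npair 1 0 \<Longrightarrow> e 0 = 0"
    by (auto simp: e_def compB_def bundle_name_def name_digit_def)
qed

lemma bundle_name_preimages:
  assumes nw: "\<Gamma>1 nw = Some (win_region xs)"
    and nm: "\<Gamma>1 nm = Some (nonlosing_region xs)"
    and ne: "\<Gamma>1 ne = Some {}"
    and a: "a < 2" and U: "upper_set (reduction_game xs) a U"
  shows "compl_closure \<Gamma>1 (compB (npair a (set_encode U)) (compB 4 (bundle_name p nw nm ne)))
           = Some (red_value xs -` U)"
proof -
  note digits = bundle_name_upper_digits[of _ p nw nm ne]
  have v3: "red_value xs x = 0 \<or> red_value xs x = 1 \<or> red_value xs x = 2" for x
    using red_value_lt3[of xs x] by arith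
  have E0: "red_value xs -` {0} = - nonlosing_region xs"
    using v3 by (fastforce simp: red_value_regions(2)[symmetric])
  have E01: "red_value xs -` {0,1} = - win_region xs"
    using v3 by (fastforce simp: red_value_regions(1)[symmetric])
  have E012: "red_value xs -` {0,1,2} = - {}" using v3 by fastforce
  note E2 = red_value_regions(1)[of xs] and E12 = red_value_regions(2)[of xs]
  from upper_cases[OF a U]
  show ?thesis
  proof (elim disjE conjE)
    assume "a = 0" "U = {}" thus ?thesis using digits ne by (simp add: compl_closure_def)
  next
    assume "a = 0" "U = {2}" thus ?thesis using digits nw E2 by (simp add: compl_closure_def)
  next
    assume "a = 0" "U = {1,2}" thus ?thesis using digits nm E12 by (simp add: compl_closure_def)
  next
    assume "a = 0" "U = {0,1,2}" thus ?thesis using digits ne E012 by (simp add: compl_closure_def)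
  next
    assume "a = 1" "U = {}" thus ?thesis using digits ne by (simp add: compl_closure_def)
  next
    assume "a = 1" "U = {0}" thus ?thesis using digits nm E0 by (simp add: compl_closure_def)
  next
    assume "a = 1" "U = {0,1}" thus ?thesis using digits nw E01 by (simp add: compl_closure_def numeral_3_eq_3)
  next
    assume "a = 1" "U = {0,1,2}" thus ?thesis using digits ne E012 by (simp add: compl_closure_def)
  qed
qed

lemma bundle_name_correct:
  assumes rep: "rep_seq (winlose_rep \<Gamma>1) p xs"
    and nw: "\<Gamma>1 nw = Some (win_region xs)"
    and nm: "\<Gamma>1 nm = Some (nonlosing_region xs)"
    and ne: "\<Gamma>1 ne = Some {}"
  shows "game_rep (compl_closure \<Gamma>1) (bundle_name p nw nm ne) (reduction_game xs)"
proof -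
  let ?r = "bundle_name p nw nm ne"
  have turn_table: "compB 0 (compB i p) (wcode w) \<in> {1, 2} \<and> (fst (xs i) w \<longleftrightarrow> compB 0 (compB i p) (wcode w) = 1)" for i w
    using rep unfolding rep_seq_def winlose_rep_def by blast
  have turn: "red_turn xs w = compB 2 ?r (wcode w)" for w
  proof -
    let ?c = "wcode w"
    let ?n = "leading_zeros ?c"
    have v: "compB 2 ?r ?c = (if in_subgame_code ?c then (if p (turn_query ?c) = 1 then 0 else 1) else 0)"
      by (simp add: compB_def bundle_name_def name_index_def name_digit_def pairB_even)
    have "p (turn_query ?c) = compB 0 (compB ?n p) (wcode (drop (Suc (Suc ?n)) w))"
      by (simp add: turn_query_def compB_def)
    thus ?thesis using v turn_table[of ?n "drop (Suc (Suc ?n)) w"] red_turn_code[of xs w] by auto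
  qed
  have prefs: "red_pref a x y \<longleftrightarrow> (a < 2 \<and> x < 3 \<and> y < 3 \<and> compB 3 ?r (npair a (npair x y)) \<noteq> 0)" for a x y
    by (auto simp: compB_def bundle_name_def name_digit_def red_pref_def)
  show ?thesis
    unfolding game_rep_def
    using wf_reduction_game[of xs] turn prefs bundle_name_preimages[OF nw nm ne]
    by (simp add: reduction_game_def compB_def bundle_name_def name_digit_def)
qed

lemma winning_sets:
  assumes "rep_seq (winlose_rep \<Gamma>1) p xs"
  shows "\<Gamma>1 (compB 1 (compB i p)) = Some (snd (xs i))"
  using assms unfolding rep_seq_def winlose_rep_def by blast

locale name_operations =
  fixes \<Gamma>1 :: pointclass and Fpre Fcl Fun Fom :: "baire \<Rightarrow> baire option"
  assumes prefix_op: "\<And>w p A. \<Gamma>1 p = Some A \<Longrightarrow>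
      \<exists>q. Fpre (pairB (const_name (wcode w)) p) = Some q \<and> \<Gamma>1 q = Some (prepend w ` A)"
    and closed_op: "\<And>p A. closed_rep p A \<Longrightarrow> \<exists>q. Fcl p = Some q \<and> \<Gamma>1 q = Some A"
    and union_op: "\<And>p q A B. \<Gamma>1 p = Some A \<Longrightarrow> \<Gamma>1 q = Some B \<Longrightarrow>
      \<exists>r. Fun (pairB p q) = Some r \<and> \<Gamma>1 r = Some (A \<union> B)"
    and omega_name_op: "\<And>p As. (\<forall>n. \<Gamma>1 (compB n p) = Some (As n)) \<Longrightarrow>
      \<exists>r. Fom p = Some r \<and> \<Gamma>1 r = Some (omega_op As)"

text \<open>Component n of true_prefix_args p is the argument for prefixing the word [True] to the
  winning set of the n-th game named by p.\<close>
definition arg_index :: "nat \<Rightarrow> nat" where "arg_index k = npair (nfst k) (npair 1 (nsnd k div 2))"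
definition arg_digit :: "nat \<Rightarrow> nat" where
  "arg_digit z = (if even (nsnd (nfst z)) then wcode [True] else nsnd z)"
definition true_prefix_args :: "baire \<Rightarrow> baire option" where
  "true_prefix_args p = Some (\<lambda>k. arg_digit (npair k (p (arg_index k))))"

lemma rec_arg_index: "total_rec arg_index" unfolding arg_index_def by (intro rec_intros)+
lemma rec_arg_digit: "total_rec arg_digit" unfolding arg_digit_def by (intro rec_intros)+

lemma compB_true_prefix_args:
  "true_prefix_args p = Some m \<Longrightarrow> compB n m = pairB (const_name (wcode [True])) (compB 1 (compB n p))"
  by (auto intro!: ext simp: true_prefix_args_def compB_def pairB_def const_name_def arg_digit_def arg_index_def)

definition name_false_branch :: "(baire \<Rightarrow> baire option) \<Rightarrow> (baire \<Rightarrow> baire option) \<Rightarrow> baire \<Rightarrow> baire option" where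
  "name_false_branch Fpre Fcl = (\<lambda>y. Option.bind (PAIR (\<lambda>y. Some (\<lambda>_. wcode [False])) (\<lambda>y. Fcl (\<lambda>_. 0)) y) Fpre)"
definition name_component where
  "name_component Fpre Fcl Fun = (\<lambda>y. Option.bind (PAIR Fpre (name_false_branch Fpre Fcl) y) Fun)"
definition name_val2 where
  "name_val2 Fpre Fom = (\<lambda>p. Option.bind (Option.bind (true_prefix_args p) (par_map Fpre)) Fom)"
definition name_val12 where
  "name_val12 Fpre Fcl Fun Fom = (\<lambda>p. Option.bind (Option.bind (true_prefix_args p) (par_map (name_component Fpre Fcl Fun))) Fom)"
definition game_name_map where
  "game_name_map Fpre Fcl Fun Fom = (\<lambda>p. Option.bind (PAIR (\<lambda>p. Some p)
       (PAIR (name_val2 Fpre Fom) (PAIR (name_val12 Fpre Fcl Fun Fom) (\<lambda>p. Fcl (\<lambda>_. 1)))) p)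
     (\<lambda>z. Some (\<lambda>k. name_digit (npair k (z (name_index k))))))"

lemma computable_game_name_map:
  assumes "computableB Fpre" "computableB Fcl" "computableB Fun" "computableB Fom"
  shows "computableB (game_name_map Fpre Fcl Fun Fom)"
proof -
  have const_Fcl: "computableB (\<lambda>p. Fcl (\<lambda>_. c))" for c
    using computable_bind[OF computable_const assms(2), of c] by simp
  have args: "computableB true_prefix_args"
    unfolding true_prefix_args_def[abs_def] by (rule computable_map[OF rec_arg_index rec_arg_digit])
  have false_branch: "computableB (name_false_branch Fpre Fcl)" unfolding name_false_branch_def
    by (rule computable_bind[OF computable_PAIR[OF computable_const const_Fcl] assms(1)])
  have component: "computableB (name_component Fpre Fcl Fun)" unfolding name_component_def
    by (rule computable_bind[OF computable_PAIR[OF assms(1) false_branch] assms(3)])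
  have val2: "computableB (name_val2 Fpre Fom)" unfolding name_val2_def
    by (rule computable_bind[OF computable_bind[OF args computable_par[OF assms(1)]] assms(4)])
  have val12: "computableB (name_val12 Fpre Fcl Fun Fom)" unfolding name_val12_def
    by (rule computable_bind[OF computable_bind[OF args computable_par[OF component]] assms(4)])
  show ?thesis unfolding game_name_map_def
    by (rule computable_bind[OF _ computable_map[OF rec_name_index rec_name_digit]])
       (intro computable_PAIR computable_id val2 val12 const_Fcl)
qed

context name_operations
begin

lemma name_univ: obtains un where "Fcl (\<lambda>_. 0) = Some un" "\<Gamma>1 un = Some UNIV"
  using closed_op[of "\<lambda>_. 0" UNIV] by (auto simp: closed_rep_def)

lemma name_empty: obtains ne where "Fcl (\<lambda>_. 1) = Some ne" "\<Gamma>1 ne = Some {}"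
  using closed_op[of "\<lambda>_. 1" "{}"] by (auto simp: closed_rep_def)

lemma name_val2_correct:
  assumes rep: "rep_seq (winlose_rep \<Gamma>1) p xs"
  obtains nw where "name_val2 Fpre Fom p = Some nw" "\<Gamma>1 nw = Some (win_region xs)"
proof -
  obtain m where m: "true_prefix_args p = Some m" by (simp add: true_prefix_args_def)
  have "\<forall>n. \<exists>q. Fpre (compB n m) = Some q \<and> \<Gamma>1 q = Some (prepend [True] ` snd (xs n))"
    using prefix_op[OF winning_sets[OF rep]] compB_true_prefix_args[OF m] by simp
  then obtain A where A: "\<And>n. Fpre (compB n m) = Some (A n)"
      "\<And>n. \<Gamma>1 (A n) = Some (prepend [True] ` snd (xs n))"
    by metis
  obtain nw where "Fom (\<lambda>k. A (nfst k) (nsnd k)) = Some nw" "\<Gamma>1 nw = Some (win_region xs)"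
    using omega_name_op[of "\<lambda>k. A (nfst k) (nsnd k)" "\<lambda>n. prepend [True] ` snd (xs n)"] A(2) by (auto simp: win_region_def)
  with par_map_Some[of Fpre m A, OF A(1)] m show ?thesis
    by (intro that) (simp_all add: name_val2_def)
qed

lemma name_val12_correct:
  assumes rep: "rep_seq (winlose_rep \<Gamma>1) p xs"
  obtains nm where "name_val12 Fpre Fcl Fun Fom p = Some nm" "\<Gamma>1 nm = Some (nonlosing_region xs)"
proof -
  obtain m where m: "true_prefix_args p = Some m" by (simp add: true_prefix_args_def)
  obtain un where un: "Fcl (\<lambda>_. 0) = Some un" "\<Gamma>1 un = Some UNIV" by (rule name_univ)
  obtain b0 where b0: "Fpre (pairB (\<lambda>_. wcode [False]) un) = Some b0" "\<Gamma>1 b0 = Some (prepend [False] ` UNIV)"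
    using prefix_op[OF un(2), of "[False]"] by (auto simp: const_name_def)
  have false_branch: "name_false_branch Fpre Fcl y = Some b0" for y
    using un b0 by (simp add: name_false_branch_def PAIR_def)
  have "\<forall>n. \<exists>r. name_component Fpre Fcl Fun (compB n m) = Some r \<and>
          \<Gamma>1 r = Some (prepend [True] ` snd (xs n) \<union> prepend [False] ` UNIV)"
  proof
    fix n
    obtain a where a: "Fpre (compB n m) = Some a" "\<Gamma>1 a = Some (prepend [True] ` snd (xs n))"
      using prefix_op[OF winning_sets[OF rep]] compB_true_prefix_args[OF m] by metis
    obtain r where "Fun (pairB a b0) = Some r" "\<Gamma>1 r = Some (prepend [True] ` snd (xs n) \<union> prepend [False] ` UNIV)"
      using union_op[OF a(2) b0(2)] by blast
    thus "\<exists>r. name_component Fpre Fcl Fun (compB n m) = Some r \<and>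
          \<Gamma>1 r = Some (prepend [True] ` snd (xs n) \<union> prepend [False] ` UNIV)"
      using a false_branch by (simp add: name_component_def PAIR_def)
  qed
  then obtain B where B: "\<And>n. name_component Fpre Fcl Fun (compB n m) = Some (B n)"
      "\<And>n. \<Gamma>1 (B n) = Some (prepend [True] ` snd (xs n) \<union> prepend [False] ` UNIV)"
    by metis
  obtain nm where "Fom (\<lambda>k. B (nfst k) (nsnd k)) = Some nm" "\<Gamma>1 nm = Some (nonlosing_region xs)"
    using omega_name_op[of "\<lambda>k. B (nfst k) (nsnd k)" "\<lambda>n. prepend [True] ` snd (xs n) \<union> prepend [False] ` UNIV"] B(2) by (auto simp: nonlosing_region_def)
  with par_map_Some[of "name_component Fpre Fcl Fun" m B, OF B(1)] m show ?thesis
    by (intro that) (simp_all add: name_val12_def)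
qed

lemma game_name_map_correct:
  assumes rep: "rep_seq (winlose_rep \<Gamma>1) p xs"
  shows "\<exists>r. game_name_map Fpre Fcl Fun Fom p = Some r \<and> game_rep (compl_closure \<Gamma>1) r (reduction_game xs)"
proof -
  obtain nw where nw: "name_val2 Fpre Fom p = Some nw" "\<Gamma>1 nw = Some (win_region xs)"
    using name_val2_correct[OF rep] .
  obtain nm where nm: "name_val12 Fpre Fcl Fun Fom p = Some nm" "\<Gamma>1 nm = Some (nonlosing_region xs)"
    using name_val12_correct[OF rep] .
  obtain ne where ne: "Fcl (\<lambda>_. 1) = Some ne" "\<Gamma>1 ne = Some {}" by (rule name_empty)
  have "game_name_map Fpre Fcl Fun Fom p = Some (bundle_name p nw nm ne)"
    using nw(1) nm(1) ne(1) by (simp add: game_name_map_def PAIR_def bundle_name_def)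
  with bundle_name_correct[OF rep nw(2) nm(2) ne(2)] show ?thesis by blast
qed

end

lemma name_operations_exist:
  assumes "standing_assumptions \<Gamma>1" "contains_closed_unif \<Gamma>1"
    "closed_fin_union_unif \<Gamma>1" "closed_omega_op_unif \<Gamma>1"
  obtains Fpre Fcl Fun Fom where "name_operations \<Gamma>1 Fpre Fcl Fun Fom"
    "computableB Fpre" "computableB Fcl" "computableB Fun" "computableB Fom"
proof -
  obtain Fpre where "computableB Fpre" and pre: "\<And>w p A. \<Gamma>1 p = Some A \<Longrightarrow>
      \<exists>q. Fpre (pairB (const_name (wcode w)) p) = Some q \<and> \<Gamma>1 q = Some (prepend w ` A)"
    using assms(1) unfolding standing_assumptions_def by blast
  moreover obtain Fcl where "computableB Fcl"
    and cl: "\<And>p A. closed_rep p A \<Longrightarrow> \<exists>q. Fcl p = Some q \<and> \<Gamma>1 q = Some A"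
    using assms(2) unfolding contains_closed_unif_def by blast
  moreover obtain Fun where "computableB Fun" and un: "\<And>p q A B. \<Gamma>1 p = Some A \<Longrightarrow> \<Gamma>1 q = Some B \<Longrightarrow>
      \<exists>r. Fun (pairB p q) = Some r \<and> \<Gamma>1 r = Some (A \<union> B)"
    using assms(3) unfolding closed_fin_union_unif_def by blast
  moreover obtain Fom where "computableB Fom" and om: "\<And>p As. (\<forall>n. \<Gamma>1 (compB n p) = Some (As n)) \<Longrightarrow>
      \<exists>r. Fom p = Some r \<and> \<Gamma>1 r = Some (omega_op As)"
    using assms(4) unfolding closed_omega_op_unif_def by blast
  moreover have "name_operations \<Gamma>1 Fpre Fcl Fun Fom"
    by unfold_locales (fact pre cl un om)+
  ultimately show ?thesis using that by blast
qed

section \<open>Reading off the winners\<close>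

text \<open>The backward half of the reduction: digit n of the answer is 1 if the profile enters the
  n-th game at history 0^n 1, and 2 otherwise.\<close>
definition winner_index :: "nat \<Rightarrow> nat" where
  "winner_index k = 2 * wcode (replicate (nfst k) False @ [True]) + 1"
definition winner_digit :: "nat \<Rightarrow> nat" where "winner_digit z = (if nsnd z = 1 then 1 else 2)"
definition read_winners :: "baire \<Rightarrow> baire option" where
  "read_winners z = Some (\<lambda>k. winner_digit (npair k (z (winner_index k))))"

lemma computable_read_winners: "computableB read_winners"
proof -
  have "total_rec winner_index" "total_rec winner_digit"
    unfolding winner_index_def winner_digit_def by (intro rec_intros)+
  thus ?thesis unfolding read_winners_def[abs_def] by (rule computable_map)
qed

lemma read_winners_correct:
  assumes "profile_rep q s"
  obtains out where "read_winners (pairB p q) = Some out"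
    "rep_seq rep_nat out (\<lambda>i. if s (entry i) then 1 else 2)"
proof
  show "read_winners (pairB p q) = Some (\<lambda>k. if q (wcode (entry (nfst k))) = 1 then 1 else 2)"
    using pairB_odd[of p q] by (simp add: read_winners_def winner_digit_def winner_index_def)
  show "rep_seq rep_nat (\<lambda>k. if q (wcode (entry (nfst k))) = 1 then 1 else 2) (\<lambda>i. if s (entry i) then 1 else 2)"
    using assms by (simp add: rep_seq_def rep_nat_def compB_def profile_rep_def)
qed

text \<open>Every subgame of an input game has a winning set in \<Gamma>1, hence is determined.\<close>
lemma subgames_determined:
  assumes sa: "standing_assumptions \<Gamma>1" and rep: "rep_seq (winlose_rep \<Gamma>1) p xs"
  shows "determined (sub_turn (fst (xs i)) v) (sub_win (snd (xs i)) v)"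
proof -
  obtain Finv where Finv: "\<And>w p A. \<Gamma>1 p = Some A \<Longrightarrow>
      \<exists>q. Finv (pairB (const_name (wcode w)) p) = Some q \<and> \<Gamma>1 q = Some {x. prepend w x \<in> A}"
    using sa unfolding standing_assumptions_def by blast
  obtain q where "\<Gamma>1 q = Some {x. prepend v x \<in> snd (xs i)}"
    using Finv[OF winning_sets[OF rep]] by blast
  hence "sub_win (snd (xs i)) v \<in> ran \<Gamma>1" unfolding sub_win_def ran_def by blast
  thus ?thesis using sa unfolding standing_assumptions_def by blast
qed

lemma reduction_realizes:
  assumes sa: "standing_assumptions \<Gamma>1" and ops: "name_operations \<Gamma>1 Fpre Fcl Fun Fom"
    and G: "realizes SPE (game_rep (compl_closure \<Gamma>1)) profile_rep G"
  shows "realizes (hat Win) (rep_seq (winlose_rep \<Gamma>1)) (rep_seq rep_nat)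
    (\<lambda>p. Option.bind (game_name_map Fpre Fcl Fun Fom p) (\<lambda>h. Option.bind (G h) (\<lambda>r. read_winners (pairB p r))))"
  unfolding realizes_def
proof (intro allI impI)
  fix p xs assume rep: "rep_seq (winlose_rep \<Gamma>1) p xs"
  obtain r where Hr: "game_name_map Fpre Fcl Fun Fom p = Some r"
    and r: "game_rep (compl_closure \<Gamma>1) r (reduction_game xs)"
    using name_operations.game_name_map_correct[OF ops rep] by blast
  note det = subgames_determined[OF sa rep]
  have "SPE (reduction_game xs) \<noteq> {}"
    using reduction_game_has_spe[OF det] by (auto simp: SPE_def antagonistic_reduction_game)
  then obtain q s where Gr: "G r = Some q" and q: "profile_rep q s" and "s \<in> SPE (reduction_game xs)"
    using G r unfolding realizes_def by blast
  hence spe: "subgame_perfect (reduction_game xs) s" by (simp add: SPE_def antagonistic_reduction_game)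
  obtain out where "read_winners (pairB p q) = Some out"
      "rep_seq rep_nat out (\<lambda>i. if s (entry i) then 1 else 2)"
    using read_winners_correct[OF q] .
  with Hr Gr winners_from_spe[OF spe det]
  show "\<exists>out ys. Option.bind (game_name_map Fpre Fcl Fun Fom p) (\<lambda>h. Option.bind (G h)
      (\<lambda>r. read_winners (pairB p r))) = Some out \<and> rep_seq rep_nat out ys \<and> ys \<in> hat Win xs"
    by auto
qed

theorem lemma28:
  fixes \<Gamma>1 :: pointclass
  assumes "standing_assumptions \<Gamma>1"
    and "contains_closed_unif \<Gamma>1"
    and "closed_fin_union_unif \<Gamma>1"
    and "closed_omega_op_unif \<Gamma>1"
    and "standing_assumptions (compl_closure \<Gamma>1)"
  shows "weihrauch_leq (hat Win) (rep_seq (winlose_rep \<Gamma>1)) (rep_seq rep_nat)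
                       SPE (game_rep (compl_closure \<Gamma>1)) profile_rep"
proof -
  obtain Fpre Fcl Fun Fom where ops: "name_operations \<Gamma>1 Fpre Fcl Fun Fom"
    and comp: "computableB Fpre" "computableB Fcl" "computableB Fun" "computableB Fom"
    using name_operations_exist[OF assms(1-4)] .
  show ?thesis
    unfolding weihrauch_leq_def
    using computable_read_winners computable_game_name_map[OF comp] reduction_realizes[OF assms(1) ops]
    by blast
qed

end
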